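(* Let $(\mathcal E,d)$ be a compact metric space, $k>1$, and $f_1,\dots,f_k$ homeomorphisms of $\mathcal E$ forming a compact contracting ping-pong (there are pairwise disjoint compact sets $A_1,B_1,\dots,A_k,B_k$ with $f_i(\mathcal E\setminus A_i)\subset B_i$, and the restrictions of $f_i$ to $\mathcal E\setminus A_i$ and of $f_i^{-1}$ to $\mathcal E\setminus B_i$ are contractions for $d$). Let $\Sigma$ be the set of bi-infinite reduced words $(g_i)_{i\in\mathbb Z}$ with letters $g_i\in\{f_j,f_j^{-1}:1\le j\le k\}$, with the product topology, $\sigma$ the shift $(\sigma(g))_i=g_{i+1}$, $\Delta=\Sigma\times\mathcal E$, and $\tilde\sigma:\Delta\to\Delta$, $\tilde\sigma((g_i),x)=(\sigma((g_i)),g_0(x))$. Then there are exactly two continuous $\tilde\sigma$-invariant sections $s^+,s^-:\Sigma\to\Delta$; they are disjoint; $s^+(\Sigma)$ is a topological attractor for $\tilde\sigma$ whose basin is $\Delta\setminus s^-(\Sigma)$, and $s^-(\Sigma)$ is a topological repellor for $\tilde\sigma$ whose basin (for $\tilde\sigma^{-1}$) is $\Delta\setminus s^+(\Sigma)$.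
   Context: A bi-infinite word $(g_i)_{i\in\mathbb Z}$ is reduced if $g_{i+1}\neq g_i^{-1}$ for all $i$. A section $s$ of $\Delta\to\Sigma$ is $\tilde\sigma$-invariant if $\tilde\sigma(s(\Sigma))=s(\Sigma)$, i.e. $s(\sigma(g))=(\sigma(g),g_0(x))$ when $s(g)=(g,x)$. A map is a contraction for $d$ on a set if it strictly decreases distances between distinct points of that set. *)

theory Defs
  imports "HOL-Analysis.Analysis"
begin

text \<open>Letters: (j, True) stands for f_j, (j, False) for f_j^{-1}, with j < k (0-based).\<close>
type_synonym letter = "nat \<times> bool"

definition letter_inv :: "letter \<Rightarrow> letter" where
  "letter_inv l = (fst l, \<not> snd l)"

definition letter_act :: "(nat \<Rightarrow> 'a \<Rightarrow> 'a) \<Rightarrow> (nat \<Rightarrow> 'a \<Rightarrow> 'a) \<Rightarrow> letter \<Rightarrow> 'a \<Rightarrow> 'a" where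
  "letter_act f finv l = (if snd l then f (fst l) else finv (fst l))"

definition Sigma_words :: "nat \<Rightarrow> (int \<Rightarrow> letter) set" where
  "Sigma_words k = {g. (\<forall>i. fst (g i) < k) \<and> (\<forall>i. g (i + 1) \<noteq> letter_inv (g i))}"

definition Sigma_top :: "nat \<Rightarrow> (int \<Rightarrow> letter) topology" where
  "Sigma_top k = subtopology (product_topology (\<lambda>_. discrete_topology UNIV) UNIV) (Sigma_words k)"

definition Delta_top :: "nat \<Rightarrow> ((int \<Rightarrow> letter) \<times> 'a::topological_space) topology" where
  "Delta_top k = prod_topology (Sigma_top k) euclidean"

definition shift :: "(int \<Rightarrow> letter) \<Rightarrow> (int \<Rightarrow> letter)" where
  "shift g = (\<lambda>i. g (i + 1))"

definition skew :: "(nat \<Rightarrow> 'a \<Rightarrow> 'a) \<Rightarrow> (nat \<Rightarrow> 'a \<Rightarrow> 'a) \<Rightarrow>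
    (int \<Rightarrow> letter) \<times> 'a \<Rightarrow> (int \<Rightarrow> letter) \<times> 'a" where
  "skew f finv p = (shift (fst p), letter_act f finv (fst p 0) (snd p))"

definition contraction_on :: "('a::metric_space \<Rightarrow> 'a) \<Rightarrow> 'a set \<Rightarrow> bool" where
  "contraction_on h S \<longleftrightarrow> (\<forall>x\<in>S. \<forall>y\<in>S. x \<noteq> y \<longrightarrow> dist (h x) (h y) < dist x y)"

definition compact_contracting_ping_pong ::
  "nat \<Rightarrow> (nat \<Rightarrow> 'a::metric_space \<Rightarrow> 'a) \<Rightarrow> (nat \<Rightarrow> 'a \<Rightarrow> 'a) \<Rightarrow> bool" where
  "compact_contracting_ping_pong k f finv \<longleftrightarrow>
     (\<exists>A B :: nat \<Rightarrow> 'a set.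
        (\<forall>i<k. compact (A i) \<and> compact (B i)) \<and>
        (\<forall>i<k. \<forall>j<k. A i \<inter> B j = {}) \<and>
        (\<forall>i<k. \<forall>j<k. i \<noteq> j \<longrightarrow> A i \<inter> A j = {} \<and> B i \<inter> B j = {}) \<and>
        (\<forall>i<k. f i ` (UNIV - A i) \<subseteq> B i) \<and>
        (\<forall>i<k. contraction_on (f i) (UNIV - A i)) \<and>
        (\<forall>i<k. contraction_on (finv i) (UNIV - B i)))"

definition continuous_section :: "nat \<Rightarrow> ((int \<Rightarrow> letter) \<Rightarrow> (int \<Rightarrow> letter) \<times> 'a::topological_space) \<Rightarrow> bool" where
  "continuous_section k s \<longleftrightarrow>
     continuous_map (Sigma_top k) (Delta_top k) s \<and> (\<forall>g\<in>Sigma_words k. fst (s g) = g)"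

definition skew_invariant_section ::
  "nat \<Rightarrow> (nat \<Rightarrow> 'a \<Rightarrow> 'a) \<Rightarrow> (nat \<Rightarrow> 'a \<Rightarrow> 'a) \<Rightarrow> ((int \<Rightarrow> letter) \<Rightarrow> (int \<Rightarrow> letter) \<times> 'a) \<Rightarrow> bool" where
  "skew_invariant_section k f finv s \<longleftrightarrow>
     skew f finv ` (s ` Sigma_words k) = s ` Sigma_words k"

definition basin :: "'b topology \<Rightarrow> ('b \<Rightarrow> 'b) \<Rightarrow> 'b set \<Rightarrow> 'b set" where
  "basin X T K = {x \<in> topspace X. \<forall>V. openin X V \<and> K \<subseteq> V \<longrightarrow>
       eventually (\<lambda>n. (T ^^ n) x \<in> V) sequentially}"

text \<open>Topological attractor (Conley): compact invariant set which is the omega-limit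
  of a trapping open neighbourhood.\<close>
definition topological_attractor :: "'b topology \<Rightarrow> ('b \<Rightarrow> 'b) \<Rightarrow> 'b set \<Rightarrow> bool" where
  "topological_attractor X T K \<longleftrightarrow>
     compactin X K \<and> T ` K = K \<and>
     (\<exists>U. openin X U \<and> K \<subseteq> U \<and> T ` (X closure_of U) \<subseteq> U \<and> K = (\<Inter>n. (T ^^ n) ` U))"

definition topological_repellor :: "'b topology \<Rightarrow> ('b \<Rightarrow> 'b) \<Rightarrow> 'b set \<Rightarrow> bool" where
  "topological_repellor X T K \<longleftrightarrow> topological_attractor X (inv_into (topspace X) T) K"

end

theory Submission
  imports Defs
begin

text \<open>For a reduced word \<open>g\<close>, each letter maps the ping-pong target of the preceding letter into
  its own target, and on these compact sets the strict contractions are uniform contractions.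
  Hence the nested compact sets \<open>g\<^sub>-\<^sub>1 \<circ> \<dots> \<circ> g\<^sub>-\<^sub>n (target g\<^sub>-\<^sub>n\<^sub>-\<^sub>1)\<close> shrink to a single point
  \<open>x\<^sup>+(g)\<close>, which depends continuously on the past of \<open>g\<close>; the same construction for the inverse
  word gives \<open>x\<^sup>-(g)\<close>, determined by the future of \<open>g\<close>. The two points lie in the disjoint targets
  of \<open>g\<^sub>-\<^sub>1\<close> and \<open>g\<^sub>0\<^sup>-\<^sup>1\<close>. A fibre point at distance \<open>\<ge> d\<close> from \<open>x\<^sup>-(g)\<close> is sent, after a number of
  steps depending only on \<open>d\<close>, into a target, after which it follows \<open>x\<^sup>+\<close>; this gives the attractor
  and its basin. If an invariant continuous section took at \<open>g\<close> a value other than \<open>x\<^sup>\<plusminus>(g)\<close>, then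
  by continuity it would do so on a word glued from \<open>g\<close> and a far shifted copy of \<open>g\<close>, and uniform
  attraction would make it close to \<open>x\<^sup>+(g)\<close> on the copy; a second gluing, together with injectivity
  of the fibre maps, rules out mixing \<open>x\<^sup>+\<close> and \<open>x\<^sup>-\<close>. The repellor statements are the attractor
  statements transported along the involution that replaces the word by its inverse, which
  conjugates the skew product with its inverse.\<close>

locale involutive_conjugacy =
  fixes X :: "'b topology" and P T S :: "'b \<Rightarrow> 'b"
  assumes continuous_P: "continuous_map X X P"
    and P_P: "\<And>p. p \<in> topspace X \<Longrightarrow> P (P p) = p"
    and T_topspace: "\<And>p. p \<in> topspace X \<Longrightarrow> T p \<in> topspace X"
    and S_conj: "\<And>p. p \<in> topspace X \<Longrightarrow> S p = P (T (P p))"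
begin

lemma P_topspace: "p \<in> topspace X \<Longrightarrow> P p \<in> topspace X"
  using continuous_map_image_subset_topspace[OF continuous_P] by blast

lemma funpow_T_topspace: "p \<in> topspace X \<Longrightarrow> (T ^^ n) p \<in> topspace X"
  by (induction n) (auto simp: T_topspace)

lemma funpow_S: "p \<in> topspace X \<Longrightarrow> (S ^^ n) p = P ((T ^^ n) (P p))"
proof (induction n)
  case 0
  then show ?case by (simp add: P_P)
next
  case (Suc n)
  have "(T ^^ n) (P p) \<in> topspace X"
    using Suc.prems by (simp add: P_topspace funpow_T_topspace)
  with Suc show ?case by (simp add: S_conj P_topspace P_P)
qed

lemma inj_on_P: "inj_on P (topspace X)"
  by (metis P_P inj_on_def)

lemma image_P_eq: "A \<subseteq> topspace X \<Longrightarrow> P ` A = {p \<in> topspace X. P p \<in> A}"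
  by (auto simp: P_topspace P_P) (metis P_P image_eqI)

lemma openin_image_P: "openin X U \<Longrightarrow> openin X (P ` U)"
  by (simp add: image_P_eq openin_subset openin_continuous_map_preimage[OF continuous_P])

lemma image_funpow_S: "A \<subseteq> topspace X \<Longrightarrow> (S ^^ n) ` P ` A = P ` (T ^^ n) ` A"
  by (auto simp: image_image funpow_S P_topspace P_P subsetD intro!: image_cong)

lemma topological_attractor_conj:
  assumes "topological_attractor X T K"
  shows "topological_attractor X S (P ` K)"
proof -
  obtain U where K: "compactin X K" "T ` K = K"
    and U: "openin X U" "K \<subseteq> U" "T ` (X closure_of U) \<subseteq> U" "K = (\<Inter>n. (T ^^ n) ` U)"
    using assms unfolding topological_attractor_def by blast
  have K_sub: "K \<subseteq> topspace X" and U_sub: "U \<subseteq> topspace X"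
    using compactin_subset_topspace[OF K(1)] openin_subset[OF U(1)] .
  have S_K: "S ` P ` K = P ` K"
    using image_funpow_S[OF K_sub, of 1] K(2) by simp
  have S_closure: "S ` (X closure_of (P ` U)) \<subseteq> P ` U"
  proof
    fix q assume "q \<in> S ` (X closure_of (P ` U))"
    then obtain p where p: "p \<in> X closure_of (P ` U)" "q = S p" by blast
    have "p \<in> topspace X" "P p \<in> X closure_of U"
      using continuous_map_closure_preimage_subset[OF continuous_P, of U] p(1)
      unfolding image_P_eq[OF U_sub] by auto
    then show "q \<in> P ` U"
      using U(3) p(2) S_conj by blast
  qed
  have K_Inter: "P ` K = (\<Inter>n. (S ^^ n) ` P ` U)"
  proof -
    have "P ` K = (\<Inter>n. P ` (T ^^ n) ` U)"
      unfolding U(4) by (rule image_INT[OF inj_on_P]) (use funpow_T_topspace U_sub in auto)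
    then show ?thesis by (simp add: image_funpow_S[OF U_sub])
  qed
  show ?thesis
    unfolding topological_attractor_def
    by (intro conjI exI[of _ "P ` U"] image_compactin[OF K(1) continuous_P]
        openin_image_P[OF U(1)] image_mono[OF U(2)] S_K S_closure K_Inter)
qed

lemma image_image_P: "V \<subseteq> topspace X \<Longrightarrow> P ` P ` V = V"
  by (force simp: image_image P_P cong: image_cong)

lemma mem_basin_conj:
  assumes p: "p \<in> topspace X" and K: "K \<subseteq> topspace X"
  shows "p \<in> basin X S (P ` K) \<longleftrightarrow> P p \<in> basin X T K"
proof -
  have orbit: "(S ^^ n) p \<in> P ` V \<longleftrightarrow> (T ^^ n) (P p) \<in> V" if "V \<subseteq> topspace X" for V n
    using that inj_on_image_mem_iff[OF inj_on_P] funpow_T_topspace P_topspace p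
    by (simp add: funpow_S)
  have "(\<forall>W. openin X W \<and> P ` K \<subseteq> W \<longrightarrow> eventually (\<lambda>n. (S ^^ n) p \<in> W) sequentially)
    \<longleftrightarrow> (\<forall>V. openin X V \<and> K \<subseteq> V \<longrightarrow> eventually (\<lambda>n. (T ^^ n) (P p) \<in> V) sequentially)"
  proof (intro iffI allI impI)
    fix V assume S_basin: "\<forall>W. openin X W \<and> P ` K \<subseteq> W \<longrightarrow> eventually (\<lambda>n. (S ^^ n) p \<in> W) sequentially"
      and V: "openin X V \<and> K \<subseteq> V"
    then have "eventually (\<lambda>n. (S ^^ n) p \<in> P ` V) sequentially"
      using openin_image_P by blast
    then show "eventually (\<lambda>n. (T ^^ n) (P p) \<in> V) sequentially"
      using orbit[OF openin_subset] V by simp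
  next
    fix W assume T_basin: "\<forall>V. openin X V \<and> K \<subseteq> V \<longrightarrow> eventually (\<lambda>n. (T ^^ n) (P p) \<in> V) sequentially"
      and W: "openin X W \<and> P ` K \<subseteq> W"
    then have "K \<subseteq> P ` W"
      using image_image_P[OF K] by blast
    then have ev: "eventually (\<lambda>n. (T ^^ n) (P p) \<in> P ` W) sequentially"
      using T_basin W openin_image_P by blast
    have W_sub: "W \<subseteq> topspace X"
      using W openin_subset by blast
    then have "P ` W \<subseteq> topspace X"
      using P_topspace by blast
    from orbit[OF this] image_image_P[OF W_sub]
    show "eventually (\<lambda>n. (S ^^ n) p \<in> W) sequentially"
      by (metis (no_types, lifting) ev eventually_mono)
  qed
  then show ?thesis
    unfolding basin_def using p P_topspace by blast
qed

lemma basin_conj: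
  assumes "K \<subseteq> topspace X"
  shows "basin X S (P ` K) = P ` basin X T K"
proof -
  have "basin X T K \<subseteq> topspace X" "basin X S (P ` K) \<subseteq> topspace X"
    unfolding basin_def by auto
  with mem_basin_conj[OF _ assms] show ?thesis
    unfolding image_P_eq[OF \<open>basin X T K \<subseteq> topspace X\<close>] by blast
qed

end

lemma letter_inv_letter_inv [simp]: "letter_inv (letter_inv l) = l"
  by (simp add: letter_inv_def)

lemma fst_letter_inv [simp]: "fst (letter_inv l) = fst l"
  by (simp add: letter_inv_def)

lemma letter_inv_eq_iff: "letter_inv a = b \<longleftrightarrow> a = letter_inv b"
  by (auto simp: letter_inv_def)

definition shiftn :: "(int \<Rightarrow> letter) \<Rightarrow> nat \<Rightarrow> (int \<Rightarrow> letter)" where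
  "shiftn g n = (\<lambda>i. g (i + int n))"

text \<open>The inverse of the bi-infinite word \<open>g\<close>, indexed so that the past of \<open>g\<close> becomes the future.\<close>
definition word_inverse :: "(int \<Rightarrow> letter) \<Rightarrow> (int \<Rightarrow> letter)" where
  "word_inverse g = (\<lambda>i. letter_inv (g (-1 - i)))"

lemma word_inverse_word_inverse [simp]: "word_inverse (word_inverse g) = g"
  by (simp add: word_inverse_def)

lemma shiftn_0 [simp]: "shiftn g 0 = g"
  by (simp add: shiftn_def)

lemma shift_shiftn: "shift (shiftn g n) = shiftn g (Suc n)"
  by (simp add: shift_def shiftn_def algebra_simps)

lemma Sigma_words_letter: "g \<in> Sigma_words k \<Longrightarrow> fst (g i) < k"
  by (simp add: Sigma_words_def)

lemma Sigma_words_reduced: "g \<in> Sigma_words k \<Longrightarrow> g (i + 1) \<noteq> letter_inv (g i)"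
  by (simp add: Sigma_words_def)

lemma Sigma_words_reduced': "g \<in> Sigma_words k \<Longrightarrow> g i \<noteq> letter_inv (g (i + 1))"
  by (metis Sigma_words_reduced letter_inv_letter_inv)

lemma Sigma_words_translate: "g \<in> Sigma_words k \<Longrightarrow> (\<lambda>i. g (i + c)) \<in> Sigma_words k"
  unfolding Sigma_words_def by (simp add: algebra_simps) (metis add.commute add.left_commute)

lemma shift_Sigma_words: "g \<in> Sigma_words k \<Longrightarrow> shift g \<in> Sigma_words k"
  unfolding shift_def by (rule Sigma_words_translate)

lemma shiftn_Sigma_words: "g \<in> Sigma_words k \<Longrightarrow> shiftn g n \<in> Sigma_words k"
  unfolding shiftn_def by (rule Sigma_words_translate)

lemma shift_image_Sigma_words: "shift ` Sigma_words k = Sigma_words k"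
proof
  show "Sigma_words k \<subseteq> shift ` Sigma_words k"
  proof
    fix g assume "g \<in> Sigma_words k"
    then have "(\<lambda>i. g (i + (-1))) \<in> Sigma_words k"
      by (rule Sigma_words_translate)
    moreover have "g = shift (\<lambda>i. g (i + (-1)))"
      by (simp add: shift_def)
    ultimately show "g \<in> shift ` Sigma_words k" by blast
  qed
qed (use shift_Sigma_words in blast)

lemma word_inverse_Sigma_words:
  assumes g: "g \<in> Sigma_words k"
  shows "word_inverse g \<in> Sigma_words k"
proof -
  have "word_inverse g (i + 1) \<noteq> letter_inv (word_inverse g i)" for i
    using Sigma_words_reduced'[OF g, of "-1 - (i + 1)"]
    by (simp add: word_inverse_def letter_inv_eq_iff algebra_simps)
  then show ?thesis
    using g by (simp add: Sigma_words_def word_inverse_def)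
qed

lemma word_inverse_image_Sigma_words: "word_inverse ` Sigma_words k = Sigma_words k"
proof
  show "Sigma_words k \<subseteq> word_inverse ` Sigma_words k"
  proof
    fix g assume "g \<in> Sigma_words k"
    then have "word_inverse (word_inverse g) \<in> word_inverse ` Sigma_words k"
      by (intro imageI word_inverse_Sigma_words)
    then show "g \<in> word_inverse ` Sigma_words k"
      by simp
  qed
qed (use word_inverse_Sigma_words in blast)

lemma exists_letter_avoiding:
  fixes a b :: letter
  assumes "k > 1"
  shows "\<exists>c. fst c < k \<and> c \<noteq> a \<and> c \<noteq> b"
proof -
  have "{(0::nat, True), (1, True), (0, False)} - {a, b} \<noteq> {}"
    by (cases a, cases b) auto
  then obtain c where "c \<in> {(0::nat, True), (1, True), (0, False)} - {a, b}"
    by blast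
  then show ?thesis
    using assms by (intro exI[of _ c]) auto
qed

text \<open>A single connecting letter keeps the glued word reduced; choosing it needs \<open>k > 1\<close>.\<close>
lemma Sigma_words_glue:
  assumes k: "k > 1" and g1: "g1 \<in> Sigma_words k" and g2: "g2 \<in> Sigma_words k"
  shows "\<exists>h\<in>Sigma_words k. (\<forall>i. \<bar>i\<bar> \<le> int M \<longrightarrow> h i = g1 i) \<and>
           (\<forall>i. \<bar>i\<bar> \<le> int M \<longrightarrow> shiftn h (2 * M + 2) i = g2 i)"
proof -
  obtain c where c: "fst c < k" "c \<noteq> letter_inv (g1 (int M))" "c \<noteq> letter_inv (g2 (- int M))"
    using exists_letter_avoiding[OF k] by blast
  define p where "p = int (2 * M + 2)"
  define h where "h i = (if i \<le> int M then g1 i else if i = int M + 1 then c else g2 (i - p))" for i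
  have "h (i + 1) \<noteq> letter_inv (h i)" for i
  proof -
    consider "i < int M" | "i = int M" | "i = int M + 1" | "i > int M + 1" by linarith
    then show ?thesis
    proof cases
      case 1
      then show ?thesis using Sigma_words_reduced[OF g1, of i] by (simp add: h_def)
    next
      case 2
      then show ?thesis using c(2) by (simp add: h_def letter_inv_eq_iff)
    next
      case 3
      then show ?thesis using c(3) by (simp add: h_def p_def) (metis letter_inv_letter_inv)
    next
      case 4
      then show ?thesis using Sigma_words_reduced[OF g2, of "i - p"] by (simp add: h_def algebra_simps)
    qed
  qed
  then have "h \<in> Sigma_words k"
    using c(1) Sigma_words_letter[OF g1] Sigma_words_letter[OF g2] by (simp add: Sigma_words_def h_def)
  moreover have "\<forall>i. \<bar>i\<bar> \<le> int M \<longrightarrow> h i = g1 i"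
    by (simp add: h_def abs_le_iff)
  moreover have "\<forall>i. \<bar>i\<bar> \<le> int M \<longrightarrow> shiftn h (2 * M + 2) i = g2 i"
    by (simp add: h_def shiftn_def p_def abs_le_iff)
  ultimately show ?thesis by blast
qed

abbreviation words_topology :: "(int \<Rightarrow> letter) topology" where
  "words_topology \<equiv> product_topology (\<lambda>_. discrete_topology UNIV) UNIV"

lemma topspace_Sigma_top [simp]: "topspace (Sigma_top k) = Sigma_words k"
  by (simp add: Sigma_top_def)

lemma topspace_Delta_top [simp]:
  "topspace (Delta_top k :: ((int \<Rightarrow> letter) \<times> 'a::topological_space) topology) = Sigma_words k \<times> UNIV"
  by (simp add: Delta_top_def)

lemma openin_cylinder:
  assumes "finite F"
  shows "openin words_topology {h. \<forall>i\<in>F. h i = g i}"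
proof -
  define V where "V i = (if i \<in> F then {g i} else UNIV)" for i
  have "{i. V i \<noteq> UNIV} \<subseteq> F"
    by (auto simp: V_def)
  then have "openin words_topology (PiE UNIV V)"
    using assms by (simp add: openin_PiE_gen finite_subset)
  moreover have "PiE UNIV V = {h. \<forall>i\<in>F. h i = g i}"
    by (auto simp: V_def PiE_UNIV_domain Pi_iff) (metis singletonD)
  ultimately show ?thesis by simp
qed

lemma openin_Sigma_cylinder:
  "finite F \<Longrightarrow> openin (Sigma_top k) {h \<in> Sigma_words k. \<forall>i\<in>F. h i = g i}"
  unfolding Sigma_top_def openin_subtopology using openin_cylinder by blast

lemma finite_int_bounded: "finite (S :: int set) \<Longrightarrow> \<exists>N::nat. \<forall>i\<in>S. \<bar>i\<bar> \<le> int N"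
proof (induction S rule: finite_induct)
  case (insert x S)
  then obtain N :: nat where "\<forall>i\<in>S. \<bar>i\<bar> \<le> int N" by blast
  then show ?case by (intro exI[of _ "max N (nat \<bar>x\<bar>)"]) auto
qed simp

lemma continuous_map_Sigma_top_local:
  fixes \<phi> :: "(int \<Rightarrow> letter) \<Rightarrow> 'a::metric_space"
  assumes cont: "continuous_map (Sigma_top k) euclidean \<phi>"
  shows "\<forall>g\<in>Sigma_words k. \<forall>r>0. \<exists>N::nat. \<forall>h\<in>Sigma_words k.
       (\<forall>i. \<bar>i\<bar> \<le> int N \<longrightarrow> h i = g i) \<longrightarrow> dist (\<phi> h) (\<phi> g) < r"
proof (intro ballI allI impI)
  fix g and r :: real assume g: "g \<in> Sigma_words k" and r: "r > 0"
  have "openin (Sigma_top k) {x \<in> topspace (Sigma_top k). \<phi> x \<in> ball (\<phi> g) r}"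
    by (rule openin_continuous_map_preimage[OF cont]) simp
  then obtain T where T: "openin words_topology T"
    "{x \<in> topspace (Sigma_top k). \<phi> x \<in> ball (\<phi> g) r} = T \<inter> Sigma_words k"
    unfolding Sigma_top_def openin_subtopology by blast
  have "g \<in> {x \<in> topspace (Sigma_top k). \<phi> x \<in> ball (\<phi> g) r}"
    using g r by simp
  then have "g \<in> T"
    using T(2) by blast
  from bspec[OF iffD1[OF openin_product_topology_alt T(1)] this]
  obtain U where U: "finite {i. U i \<noteq> UNIV}" "g \<in> PiE UNIV U" "PiE UNIV U \<subseteq> T"
    by auto
  obtain N :: nat where N: "\<forall>i\<in>{i. U i \<noteq> UNIV}. \<bar>i\<bar> \<le> int N"
    using finite_int_bounded[OF U(1)] by blast
  have "dist (\<phi> h) (\<phi> g) < r"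
    if h: "h \<in> Sigma_words k" and agree: "\<forall>i. \<bar>i\<bar> \<le> int N \<longrightarrow> h i = g i" for h
  proof -
    have "h i \<in> U i" for i
    proof (cases "U i = UNIV")
      case False
      then show ?thesis
        using N agree U(2) by (simp add: PiE_UNIV_domain Pi_iff)
    qed simp
    then have "h \<in> T \<inter> Sigma_words k"
      using U(3) h by (auto simp: PiE_UNIV_domain)
    then have "\<phi> h \<in> ball (\<phi> g) r"
      using T(2) by blast
    then show ?thesis
      by (simp add: dist_commute)
  qed
  then show "\<exists>N::nat. \<forall>h\<in>Sigma_words k. (\<forall>i. \<bar>i\<bar> \<le> int N \<longrightarrow> h i = g i) \<longrightarrow> dist (\<phi> h) (\<phi> g) < r"
    by blast
qed

lemma continuous_map_Sigma_topI:
  fixes \<phi> :: "(int \<Rightarrow> letter) \<Rightarrow> 'a::metric_space"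
  assumes local: "\<forall>g\<in>Sigma_words k. \<forall>r>0. \<exists>N::nat. \<forall>h\<in>Sigma_words k.
       (\<forall>i. \<bar>i\<bar> \<le> int N \<longrightarrow> h i = g i) \<longrightarrow> dist (\<phi> h) (\<phi> g) < r"
  shows "continuous_map (Sigma_top k) euclidean \<phi>"
  unfolding continuous_map
proof (intro conjI allI impI)
  fix U :: "'a set" assume U: "openin euclidean U"
  show "openin (Sigma_top k) {x \<in> topspace (Sigma_top k). \<phi> x \<in> U}"
  proof (subst openin_subopen, intro ballI)
    fix g assume "g \<in> {x \<in> topspace (Sigma_top k). \<phi> x \<in> U}"
    then have g: "g \<in> Sigma_words k" "\<phi> g \<in> U" by auto
    obtain r where r: "r > 0" "ball (\<phi> g) r \<subseteq> U"
      using U g(2) open_contains_ball by (metis open_openin)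
    obtain N :: nat where N: "\<forall>h\<in>Sigma_words k. (\<forall>i. \<bar>i\<bar> \<le> int N \<longrightarrow> h i = g i) \<longrightarrow> dist (\<phi> h) (\<phi> g) < r"
      using local g r by blast
    let ?C = "{h \<in> Sigma_words k. \<forall>i\<in>{-int N..int N}. h i = g i}"
    have "\<phi> h \<in> U" if "h \<in> ?C" for h
    proof -
      have "dist (\<phi> h) (\<phi> g) < r"
        using N that by (auto simp: abs_le_iff)
      then show ?thesis
        using r(2) by (auto simp: dist_commute)
    qed
    then have "?C \<subseteq> {x \<in> topspace (Sigma_top k). \<phi> x \<in> U}"
      by auto
    then show "\<exists>T. openin (Sigma_top k) T \<and> g \<in> T \<and> T \<subseteq> {x \<in> topspace (Sigma_top k). \<phi> x \<in> U}"
      using openin_Sigma_cylinder[of "{-int N..int N}" k g] g by blast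
  qed
qed simp

lemma continuous_map_Sigma_top_iff:
  fixes \<phi> :: "(int \<Rightarrow> letter) \<Rightarrow> 'a::metric_space"
  shows "continuous_map (Sigma_top k) euclidean \<phi> \<longleftrightarrow> (\<forall>g\<in>Sigma_words k. \<forall>r>0. \<exists>N::nat. \<forall>h\<in>Sigma_words k.
       (\<forall>i. \<bar>i\<bar> \<le> int N \<longrightarrow> h i = g i) \<longrightarrow> dist (\<phi> h) (\<phi> g) < r)"
  by (rule iffI[OF continuous_map_Sigma_top_local continuous_map_Sigma_topI])

lemma closedin_Sigma_words: "closedin words_topology (Sigma_words k)"
  unfolding closedin_def
proof (intro conjI)
  show "openin words_topology (topspace words_topology - Sigma_words k)"
  proof (subst openin_subopen, intro ballI)
    fix g assume "g \<in> topspace words_topology - Sigma_words k"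
    then obtain i where i: "\<not> fst (g i) < k \<or> g (i + 1) = letter_inv (g i)"
      by (auto simp: Sigma_words_def)
    have "{h. \<forall>j\<in>{i, i + 1}. h j = g j} \<subseteq> topspace words_topology - Sigma_words k"
      using i unfolding Sigma_words_def by (auto; metis)
    then show "\<exists>T. openin words_topology T \<and> g \<in> T \<and> T \<subseteq> topspace words_topology - Sigma_words k"
      using openin_cylinder[of "{i, i + 1}" g] by blast
  qed
qed simp

lemma compactin_Sigma_words: "compactin (Sigma_top k) (Sigma_words k)"
proof -
  have "finite {l :: letter. fst l < k}"
    by (rule finite_subset[of _ "{..<k} \<times> UNIV"]) auto
  then have "compactin words_topology (PiE UNIV (\<lambda>_. {l. fst l < k}))"
    by (simp add: compactin_PiE finite_imp_compactin)
  moreover have "Sigma_words k \<subseteq> PiE UNIV (\<lambda>_. {l. fst l < k})"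
    by (auto simp: Sigma_words_def PiE_UNIV_domain)
  ultimately have "compactin words_topology (Sigma_words k)"
    using closed_compactin closedin_Sigma_words by blast
  then show ?thesis
    by (simp add: Sigma_top_def compactin_subtopology)
qed

lemma continuous_map_word_inverse: "continuous_map (Sigma_top k) (Sigma_top k) word_inverse"
proof -
  have "continuous_map words_topology words_topology word_inverse"
    unfolding continuous_map_componentwise_UNIV
  proof
    fix i :: int
    have "continuous_map words_topology (discrete_topology UNIV) (letter_inv \<circ> (\<lambda>g. g (-1 - i)))"
      by (rule continuous_map_compose[OF continuous_map_product_projection]) simp_all
    then show "continuous_map words_topology (discrete_topology UNIV) (\<lambda>g. word_inverse g i)"
      by (simp add: word_inverse_def o_def)
  qed
  then show ?thesis
    unfolding Sigma_top_def continuous_map_in_subtopology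
    using continuous_map_from_subtopology word_inverse_Sigma_words by fastforce
qed

lemma openin_Delta_top_first_letter:
  assumes "\<And>l. fst l < k \<Longrightarrow> open (Y l)"
  shows "openin (Delta_top k) {p \<in> Sigma_words k \<times> UNIV. snd p \<in> Y (fst p 0)}"
proof -
  let ?C = "\<lambda>g. {h \<in> Sigma_words k. \<forall>i\<in>{0}. h i = g i} \<times> Y (g 0)"
  have "{p \<in> Sigma_words k \<times> UNIV. snd p \<in> Y (fst p 0)} = \<Union>(?C ` Sigma_words k)"
  proof (intro equalityI subsetI)
    fix p assume "p \<in> {p \<in> Sigma_words k \<times> UNIV. snd p \<in> Y (fst p 0)}"
    then have "fst p \<in> Sigma_words k" "p \<in> ?C (fst p)"
      by (cases p, simp)+
    then show "p \<in> \<Union>(?C ` Sigma_words k)" by blast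
  next
    fix p assume "p \<in> \<Union>(?C ` Sigma_words k)"
    then obtain g where "g \<in> Sigma_words k" "p \<in> ?C g" by blast
    then show "p \<in> {p \<in> Sigma_words k \<times> UNIV. snd p \<in> Y (fst p 0)}"
      by (cases p) simp
  qed
  moreover have "openin (Delta_top k) (?C g)" if "g \<in> Sigma_words k" for g
  proof -
    have "openin euclidean (Y (g 0))"
      using assms[OF Sigma_words_letter[OF that]] by (simp only: open_openin)
    then show ?thesis
      unfolding Delta_top_def openin_prod_Times_iff
      by (intro disjI2 conjI openin_Sigma_cylinder) simp_all
  qed
  ultimately show ?thesis
    by (metis (no_types, lifting) imageE openin_Union)
qed

locale ping_pong =
  fixes k :: nat and f finv :: "nat \<Rightarrow> 'a::metric_space \<Rightarrow> 'a" and A B :: "nat \<Rightarrow> 'a set"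
  assumes compact_UNIV: "compact (UNIV :: 'a set)" and k_gt_1: "k > 1"
    and homeo: "\<forall>i<k. homeomorphism UNIV UNIV (f i) (finv i)"
    and compact_AB: "\<forall>i<k. compact (A i) \<and> compact (B i)"
    and disjoint_AB: "\<forall>i<k. \<forall>j<k. A i \<inter> B j = {}"
    and disjoint_AA_BB: "\<forall>i<k. \<forall>j<k. i \<noteq> j \<longrightarrow> A i \<inter> A j = {} \<and> B i \<inter> B j = {}"
    and f_maps_into_B: "\<forall>i<k. f i ` (UNIV - A i) \<subseteq> B i"
    and contraction_f: "\<forall>i<k. contraction_on (f i) (UNIV - A i)"
    and contraction_finv: "\<forall>i<k. contraction_on (finv i) (UNIV - B i)"
begin

abbreviation Sig :: "(int \<Rightarrow> letter) set" where
  "Sig \<equiv> Sigma_words k"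

definition act :: "letter \<Rightarrow> 'a \<Rightarrow> 'a" where
  "act = letter_act f finv"

definition target :: "letter \<Rightarrow> 'a set" where
  "target l = (if snd l then B (fst l) else A (fst l))"

definition source :: "letter \<Rightarrow> 'a set" where
  "source l = UNIV - target (letter_inv l)"

definition incoming :: "letter \<Rightarrow> 'a set" where
  "incoming l = \<Union>{target l' | l'. fst l' < k \<and> l' \<noteq> letter_inv l}"

lemma act_letter_inv: "fst l < k \<Longrightarrow> act (letter_inv l) (act l x) = x"
  using homeo unfolding act_def letter_act_def letter_inv_def homeomorphism_def by auto

lemma act_act_letter_inv: "fst l < k \<Longrightarrow> act l (act (letter_inv l) x) = x"
  using act_letter_inv[of "letter_inv l"] by simp

lemma continuous_on_act: "fst l < k \<Longrightarrow> continuous_on UNIV (act l)"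
  using homeo unfolding act_def letter_act_def homeomorphism_def by auto

lemma compact_target: "fst l < k \<Longrightarrow> compact (target l)"
  using compact_AB by (simp add: target_def)

lemma disjoint_target:
  assumes l: "fst l < k" "fst l' < k" "l \<noteq> l'"
  shows "target l \<inter> target l' = {}"
proof -
  obtain i b j c where ll': "l = (i, b)" "l' = (j, c)" by force
  with l have "i < k" "j < k" by auto
  with l ll' disjoint_AB disjoint_AA_BB show ?thesis
    by (cases b; cases c) (auto simp: target_def)
qed

lemma act_source: 
  assumes l: "fst l < k" and x: "x \<in> source l"
  shows "act l x \<in> target l"
proof (cases l)
  case (Pair i b)
  show ?thesis
  proof (cases b)
    case True
    then show ?thesis
      using f_maps_into_B l x Pair by (auto simp: source_def target_def act_def letter_act_def letter_inv_def)
  next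
    case False
    have "finv i x \<in> A i"
    proof (rule ccontr)
      assume "finv i x \<notin> A i"
      then have "f i (finv i x) \<in> B i"
        using f_maps_into_B l Pair by auto
      moreover have "f i (finv i x) = x"
        using homeo l Pair unfolding homeomorphism_def by auto
      ultimately show False
        using x Pair False by (auto simp: source_def target_def letter_inv_def)
    qed
    then show ?thesis
      using Pair False by (simp add: target_def act_def letter_act_def)
  qed
qed

lemma act_contracts_source:
  assumes "fst l < k" "x \<in> source l" "y \<in> source l" "x \<noteq> y"
  shows "dist (act l x) (act l y) < dist x y"
  using assms contraction_f contraction_finv
  by (cases l) (auto simp: contraction_on_def source_def target_def act_def letter_act_def letter_inv_def)

lemma act_nonexpansive_source:
  "fst l < k \<Longrightarrow> x \<in> source l \<Longrightarrow> y \<in> source l \<Longrightarrow> dist (act l x) (act l y) \<le> dist x y"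
  by (cases "x = y") (auto dest: act_contracts_source[of l x y])

lemma target_nonempty:
  assumes l: "fst l < k"
  shows "target l \<noteq> {}"
proof
  assume empty: "target l = {}"
  obtain i b where l_eq: "l = (i, b)" by force
  define j where "j = (if i = 0 then 1 else (0::nat))"
  have j: "j < k" "j \<noteq> i" and i: "i < k"
    using k_gt_1 l l_eq by (auto simp: j_def)
  have "A j = UNIV" if "B j = {}"
    using f_maps_into_B j that by blast
  show False
  proof (cases b)
    case True
    then have "A i = UNIV"
      using empty l_eq f_maps_into_B i by (auto simp: target_def)
    then have "B j = {}" "A i \<inter> A j = {}"
      using disjoint_AB disjoint_AA_BB i j by auto
    with \<open>B j = {} \<Longrightarrow> A j = UNIV\<close> \<open>A i = UNIV\<close> show False by auto
  next
    case False
    have "A i = {}"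
      using empty l_eq False by (simp add: target_def)
    then have "f i ` UNIV \<subseteq> B i"
      using f_maps_into_B i by auto
    moreover have "f i ` UNIV = UNIV"
      using homeo i unfolding homeomorphism_def by auto
    ultimately have "B i = UNIV"
      by auto
    then have "B j = {}"
      using disjoint_AA_BB i j by auto
    with \<open>B j = {} \<Longrightarrow> A j = UNIV\<close> \<open>B i = UNIV\<close> show False
      using disjoint_AB i j by auto
  qed
qed

lemma compact_incoming: "compact (incoming l)"
proof -
  have "{target l' | l'. fst l' < k \<and> l' \<noteq> letter_inv l} \<subseteq> target ` ({..<k} \<times> UNIV)"
    by auto
  then have "finite {target l' | l'. fst l' < k \<and> l' \<noteq> letter_inv l}"
    by (rule finite_subset) auto
  then show ?thesis
    unfolding incoming_def using compact_target by (intro compact_Union) auto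
qed

lemma incoming_subset_source: "fst l < k \<Longrightarrow> incoming l \<subseteq> source l"
  using disjoint_target[of _ "letter_inv l"] by (fastforce simp: incoming_def source_def)

lemma target_subset_incoming: "fst l' < k \<Longrightarrow> l' \<noteq> letter_inv l \<Longrightarrow> target l' \<subseteq> incoming l"
  unfolding incoming_def by blast

lemma target_subset_incoming_next:
  "g \<in> Sig \<Longrightarrow> j = i + 1 \<Longrightarrow> target (g i) \<subseteq> incoming (g j)"
  using Sigma_words_reduced' Sigma_words_letter target_subset_incoming by blast

lemma act_incoming: "fst l < k \<Longrightarrow> x \<in> incoming l \<Longrightarrow> act l x \<in> target l"
  using incoming_subset_source act_source by blast

text \<open>\<open>word_act g m n = g\<^sub>m\<^sub>-\<^sub>1 \<circ> \<dots> \<circ> g\<^sub>m\<^sub>-\<^sub>n\<close>, the action of the subword of \<open>g\<close> ending just before \<open>m\<close>.\<close>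
primrec word_act :: "(int \<Rightarrow> letter) \<Rightarrow> int \<Rightarrow> nat \<Rightarrow> 'a \<Rightarrow> 'a" where
  "word_act g m 0 x = x"
| "word_act g m (Suc n) x = word_act g m n (act (g (m - int n - 1)) x)"

lemma word_act_Suc_outer: "word_act g m (Suc n) x = act (g (m - 1)) (word_act g (m - 1) n x)"
proof (induction n arbitrary: x)
  case (Suc n)
  have "word_act g m (Suc (Suc n)) x = word_act g m (Suc n) (act (g (m - int n - 2)) x)"
    by (simp add: algebra_simps)
  also have "\<dots> = act (g (m - 1)) (word_act g (m - 1) n (act (g (m - int n - 2)) x))"
    by (rule Suc)
  also have "\<dots> = act (g (m - 1)) (word_act g (m - 1) (Suc n) x)"
    by (simp add: algebra_simps)
  finally show ?case .
qed simp

lemma word_act_add: "word_act g m (a + b) x = word_act g m a (word_act g (m - int a) b x)"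
  by (induction b arbitrary: x) (simp_all add: algebra_simps)

lemma word_act_translate: "word_act (\<lambda>i. g (i + c)) m n x = word_act g (m + c) n x"
  by (induction n arbitrary: x) (simp_all add: algebra_simps)

lemma word_act_cong:
  "(\<And>i. m - int n \<le> i \<Longrightarrow> i < m \<Longrightarrow> g i = h i) \<Longrightarrow> word_act g m n x = word_act h m n x"
  by (induction n arbitrary: x) auto

lemma continuous_on_word_act:
  assumes g: "g \<in> Sig"
  shows "continuous_on UNIV (word_act g m n)"
proof (induction n)
  case (Suc n)
  have "continuous_on UNIV (\<lambda>x. word_act g m n (act (g (m - int n - 1)) x))"
    by (rule continuous_on_compose2[OF Suc.IH continuous_on_act[OF Sigma_words_letter[OF g]]]) auto
  then show ?case by simp
qed (simp add: continuous_on_id')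

text \<open>All intermediate images stay in incoming sets, so while the two images are \<open>r\<close> apart
  every letter gains \<open>e\<close>.\<close>
lemma word_act_dist_decrease:
  assumes gain: "\<And>l u v. fst l < k \<Longrightarrow> u \<in> incoming l \<Longrightarrow> v \<in> incoming l \<Longrightarrow> r \<le> dist u v \<Longrightarrow>
      dist (act l u) (act l v) \<le> dist u v - e"
    and e: "e \<ge> 0" and g: "g \<in> Sig"
  shows "u \<in> incoming (g (m - int n)) \<Longrightarrow> v \<in> incoming (g (m - int n)) \<Longrightarrow>
    r \<le> dist (word_act g m n u) (word_act g m n v) \<Longrightarrow>
    dist (word_act g m n u) (word_act g m n v) \<le> dist u v - n * e"
proof (induction n arbitrary: u v)
  case (Suc n)
  let ?l = "g (m - int n - 1)"
  have l: "fst ?l < k"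
    using Sigma_words_letter[OF g] .
  have uv: "u \<in> incoming ?l" "v \<in> incoming ?l"
    using Suc.prems by (simp_all add: algebra_simps)
  have "target ?l \<subseteq> incoming (g (m - int n))"
    using target_subset_incoming_next[OF g, of "m - int n" "m - int n - 1"] by simp
  then have act_uv: "act ?l u \<in> incoming (g (m - int n))" "act ?l v \<in> incoming (g (m - int n))"
    using act_incoming[OF l] uv by auto
  have IH: "dist (word_act g m (Suc n) u) (word_act g m (Suc n) v) \<le> dist (act ?l u) (act ?l v) - n * e"
    using Suc.IH[OF act_uv] Suc.prems(3) by simp
  have "0 \<le> real n * e"
    using e by simp
  then have "r \<le> dist (act ?l u) (act ?l v)"
    using IH Suc.prems(3) by linarith
  also have "\<dots> \<le> dist u v"
    using act_nonexpansive_source[OF l] incoming_subset_source[OF l] uv by auto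
  finally have "dist (act ?l u) (act ?l v) \<le> dist u v - e"
    using gain[OF l uv] by blast
  then show ?case
    using IH by (simp add: algebra_simps)
qed simp

text \<open>Compactness of the incoming sets turns the strict contraction into a uniform gain \<open>e\<close>
  at scale \<open>r\<close>.\<close>
lemma act_uniform_gain:
  assumes l: "fst l < k" and r: "r > 0"
  shows "\<exists>e>0. \<forall>u\<in>incoming l. \<forall>v\<in>incoming l. r \<le> dist u v \<longrightarrow>
    dist (act l u) (act l v) \<le> dist u v - e"
proof -
  let ?S = "(incoming l \<times> incoming l) \<inter> {p. r \<le> dist (fst p) (snd p)}"
  let ?gain = "\<lambda>p. dist (fst p) (snd p) - dist (act l (fst p)) (act l (snd p))"
  show ?thesis
  proof (cases "?S = {}")
    case True
    then show ?thesis by (intro exI[of _ 1]) auto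
  next
    case False
    have "closed {p :: 'a \<times> 'a. r \<le> dist (fst p) (snd p)}"
      by (rule closed_Collect_le) (intro continuous_intros)+
    then have "compact ?S"
      using compact_incoming by (intro compact_Int_closed compact_Times) auto
    moreover have "continuous_on ?S ?gain"
      by (intro continuous_intros continuous_on_compose2[OF continuous_on_act[OF l]]) auto
    ultimately obtain p where p: "p \<in> ?S" "\<forall>q\<in>?S. ?gain p \<le> ?gain q"
      using continuous_attains_inf[OF _ False] by blast
    have "fst p \<noteq> snd p" "fst p \<in> source l" "snd p \<in> source l"
      using p r incoming_subset_source[OF l] by auto
    then have "?gain p > 0"
      using act_contracts_source[OF l] by simp
    moreover have "dist (act l u) (act l v) \<le> dist u v - ?gain p"
      if "u \<in> incoming l" "v \<in> incoming l" "r \<le> dist u v" for u v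
      using p(2)[rule_format, of "(u, v)"] that by simp
    ultimately show ?thesis by blast
  qed
qed

lemma uniform_contraction_gain:
  assumes r: "r > 0"
  shows "\<exists>e>0. \<forall>l u v. fst l < k \<longrightarrow> u \<in> incoming l \<longrightarrow> v \<in> incoming l \<longrightarrow> r \<le> dist u v \<longrightarrow>
      dist (act l u) (act l v) \<le> dist u v - e"
proof -
  have "\<exists>e>0. \<forall>u\<in>incoming l. \<forall>v\<in>incoming l. r \<le> dist u v \<longrightarrow> dist (act l u) (act l v) \<le> dist u v - e"
    if "fst l < k" for l
    using act_uniform_gain[OF that r] .
  then obtain e where e: "\<And>l. fst l < k \<Longrightarrow> e l > 0 \<and> (\<forall>u\<in>incoming l. \<forall>v\<in>incoming l.
      r \<le> dist u v \<longrightarrow> dist (act l u) (act l v) \<le> dist u v - e l)"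
    by metis
  let ?L = "{..<k} \<times> (UNIV :: bool set)"
  have L: "finite ?L" "?L \<noteq> {}"
    using k_gt_1 by auto
  have Min_pos: "Min (e ` ?L) > 0"
    using L e by (subst Min_gr_iff) auto
  have Min_le_e: "Min (e ` ?L) \<le> e l" if "fst l < k" for l
  proof -
    have "l \<in> ?L"
      using that by (cases l) auto
    then show ?thesis
      using L(1) by (auto intro: Min_le)
  qed
  show ?thesis
  proof (intro exI[of _ "Min (e ` ?L)"] conjI allI impI Min_pos)
    fix l u v assume "fst l < k" "u \<in> incoming l" "v \<in> incoming l" "r \<le> dist u v"
    then show "dist (act l u) (act l v) \<le> dist u v - Min (e ` ?L)"
      using e[of l] Min_le_e[of l] by force
  qed
qed

lemma word_act_uniformly_shrinking:
  assumes r: "r > 0"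
  shows "\<exists>N. \<forall>n\<ge>N. \<forall>g\<in>Sig. \<forall>m u v. u \<in> incoming (g (m - int n)) \<longrightarrow> v \<in> incoming (g (m - int n)) \<longrightarrow>
    dist (word_act g m n u) (word_act g m n v) < r"
proof -
  obtain e where e: "e > 0" "\<And>l u v. fst l < k \<Longrightarrow> u \<in> incoming l \<Longrightarrow> v \<in> incoming l \<Longrightarrow>
      r \<le> dist u v \<Longrightarrow> dist (act l u) (act l v) \<le> dist u v - e"
    using uniform_contraction_gain[OF r] by blast
  obtain M where M: "\<And>x y :: 'a. dist x y \<le> M"
    using compact_imp_bounded[OF compact_UNIV] unfolding bounded_two_points by blast
  obtain N :: nat where N: "M / e < N"
    using reals_Archimedean2 by blast
  have "dist (word_act g m n u) (word_act g m n v) < r"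
    if "N \<le> n" "g \<in> Sig" "u \<in> incoming (g (m - int n))" "v \<in> incoming (g (m - int n))" for n g m u v
  proof (rule ccontr)
    assume "\<not> ?thesis"
    then have "dist (word_act g m n u) (word_act g m n v) \<le> dist u v - n * e"
      using word_act_dist_decrease[OF e(2) _ that(2-4)] e(1) by simp
    moreover have "M < N * e" "real N * e \<le> real n * e"
      using N e(1) that(1) by (simp_all add: divide_less_eq mult_right_mono)
    ultimately show False
      using M[of u v] zero_le_dist[of "word_act g m n u" "word_act g m n v"] by linarith
  qed
  then show ?thesis by blast
qed

definition past_image :: "(int \<Rightarrow> letter) \<Rightarrow> nat \<Rightarrow> 'a set" where
  "past_image g n = word_act g 0 n ` target (g (- int n - 1))"

lemma past_image_0: "past_image g 0 = target (g (-1))"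
  by (simp add: past_image_def)

lemma past_image_Suc_subset:
  assumes g: "g \<in> Sig"
  shows "past_image g (Suc n) \<subseteq> past_image g n"
proof
  fix y assume "y \<in> past_image g (Suc n)"
  then obtain u where u: "u \<in> target (g (- int n - 2))" "y = word_act g 0 (Suc n) u"
    unfolding past_image_def by (auto simp: algebra_simps)
  have "u \<in> incoming (g (- int n - 1))"
    using u(1) target_subset_incoming_next[OF g, of "- int n - 1" "- int n - 2"] by auto
  then have "act (g (- int n - 1)) u \<in> target (g (- int n - 1))"
    using act_incoming Sigma_words_letter[OF g] by blast
  moreover have "y = word_act g 0 n (act (g (- int n - 1)) u)"
    using u(2) by simp
  ultimately show "y \<in> past_image g n"
    unfolding past_image_def by blast
qed

lemma past_image_antimono: "g \<in> Sig \<Longrightarrow> m \<le> n \<Longrightarrow> past_image g n \<subseteq> past_image g m"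
  using decseq_SucI[of "past_image g"] past_image_Suc_subset by (simp add: decseq_def)

lemma compact_past_image: "g \<in> Sig \<Longrightarrow> compact (past_image g n)"
  unfolding past_image_def
  by (rule compact_continuous_image[OF continuous_on_subset[OF continuous_on_word_act]])
    (auto intro: compact_target Sigma_words_letter)

lemma past_image_nonempty: "g \<in> Sig \<Longrightarrow> past_image g n \<noteq> {}"
  unfolding past_image_def using target_nonempty Sigma_words_letter by auto

lemma past_image_uniformly_small:
  assumes r: "r > 0"
  shows "\<exists>N. \<forall>n\<ge>N. \<forall>g\<in>Sig. \<forall>y\<in>past_image g n. \<forall>z\<in>past_image g n. dist y z < r"
proof -
  obtain N where N: "\<forall>n\<ge>N. \<forall>g\<in>Sig. \<forall>m u v. u \<in> incoming (g (m - int n)) \<longrightarrow>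
      v \<in> incoming (g (m - int n)) \<longrightarrow> dist (word_act g m n u) (word_act g m n v) < r"
    using word_act_uniformly_shrinking[OF r] by blast
  have "dist y z < r"
    if n: "N \<le> n" and g: "g \<in> Sig" and yz: "y \<in> past_image g n" "z \<in> past_image g n" for n g y z
  proof -
    obtain u v where uv: "u \<in> target (g (- int n - 1))" "v \<in> target (g (- int n - 1))"
      "y = word_act g 0 n u" "z = word_act g 0 n v"
      using yz unfolding past_image_def by blast
    have "u \<in> incoming (g (0 - int n))" "v \<in> incoming (g (0 - int n))"
      using uv(1,2) target_subset_incoming_next[OF g, of "0 - int n" "- int n - 1"] by auto
    then show ?thesis
      using N n g uv(3,4) by blast
  qed
  then show ?thesis by blast
qed

definition x_plus :: "(int \<Rightarrow> letter) \<Rightarrow> 'a" where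
  "x_plus g = (SOME x. \<forall>n. x \<in> past_image g n)"

definition x_minus :: "(int \<Rightarrow> letter) \<Rightarrow> 'a" where
  "x_minus g = x_plus (word_inverse g)"

lemma past_images_intersect:
  assumes g: "g \<in> Sig"
  shows "\<exists>x. \<forall>n. x \<in> past_image g n"
proof -
  have "UNIV \<inter> (\<Inter>n. past_image g n) \<noteq> {}"
  proof (rule compact_imp_fip_image[OF compact_UNIV])
    fix I :: "nat set" assume I: "finite I" "I \<subseteq> UNIV"
    show "UNIV \<inter> (\<Inter>i\<in>I. past_image g i) \<noteq> {}"
    proof (cases "I = {}")
      case False
      then have "past_image g (Max I) \<subseteq> (\<Inter>i\<in>I. past_image g i)"
        using past_image_antimono[OF g] Max_ge[OF I(1)] by blast
      then show ?thesis
        using past_image_nonempty[OF g] by blast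
    qed simp
  qed (use compact_past_image[OF g] compact_imp_closed in blast)
  then show ?thesis by blast
qed

lemma x_plus_past_image: "g \<in> Sig \<Longrightarrow> x_plus g \<in> past_image g n"
  unfolding x_plus_def using someI_ex[OF past_images_intersect] by blast

lemma x_plus_unique:
  assumes g: "g \<in> Sig" and y: "\<forall>n. y \<in> past_image g n"
  shows "y = x_plus g"
proof -
  have "dist y (x_plus g) < r" if "r > 0" for r
    using past_image_uniformly_small[OF that] y x_plus_past_image[OF g] g by blast
  then show ?thesis
    by (metis dist_pos_lt less_irrefl)
qed

lemma x_plus_target: "g \<in> Sig \<Longrightarrow> x_plus g \<in> target (g (-1))"
  using x_plus_past_image[of g 0] past_image_0 by simp

lemma x_minus_target: "g \<in> Sig \<Longrightarrow> x_minus g \<in> target (letter_inv (g 0))"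
  using x_plus_target[OF word_inverse_Sigma_words] by (simp add: x_minus_def word_inverse_def)

lemma x_plus_ne_x_minus:
  assumes g: "g \<in> Sig"
  shows "x_plus g \<noteq> x_minus g"
proof -
  have "g (-1) \<noteq> letter_inv (g 0)"
    using Sigma_words_reduced'[OF g, of "-1"] by simp
  moreover have "fst (g (-1)) < k" "fst (letter_inv (g 0)) < k"
    using Sigma_words_letter[OF g] by auto
  ultimately have "target (g (-1)) \<inter> target (letter_inv (g 0)) = {}"
    by (rule disjoint_target[rotated 2])
  moreover have "x_plus g \<in> target (g (-1))" "x_minus g \<in> target (letter_inv (g 0))"
    using x_plus_target[OF g] x_minus_target[OF g] .
  ultimately show ?thesis
    by (metis disjoint_iff)
qed

lemma past_image_shift:
  assumes g: "g \<in> Sig"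
  shows "past_image (shift g) (Suc n) = act (g 0) ` past_image g n"
proof -
  have "word_act (shift g) 0 (Suc n) x = act (g 0) (word_act g 0 n x)" for x
    using word_act_translate[of g 1 0 "Suc n" x] word_act_Suc_outer[of g 1 n x]
    by (simp add: shift_def del: word_act.simps)
  moreover have "shift g (- int (Suc n) - 1) = g (- int n - 1)"
    unfolding shift_def by (rule arg_cong[where f = g]) simp
  ultimately show ?thesis
    unfolding past_image_def by (simp add: image_image)
qed

lemma x_plus_shift:
  assumes g: "g \<in> Sig"
  shows "x_plus (shift g) = act (g 0) (x_plus g)"
proof -
  have "act (g 0) (x_plus g) \<in> past_image (shift g) n" for n
    using past_image_shift[OF g] x_plus_past_image[OF g]
      past_image_antimono[OF shift_Sigma_words[OF g], of n "Suc n"] by auto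
  then have "act (g 0) (x_plus g) = x_plus (shift g)"
    by (intro x_plus_unique shift_Sigma_words g) blast
  then show ?thesis by simp
qed

lemma x_minus_shift:
  assumes g: "g \<in> Sig"
  shows "x_minus (shift g) = act (g 0) (x_minus g)"
proof -
  let ?h = "word_inverse (shift g)"
  have "shift ?h = word_inverse g"
  proof
    fix i
    show "shift ?h i = word_inverse g i"
      unfolding shift_def word_inverse_def by (rule arg_cong[where f = "\<lambda>j. letter_inv (g j)"]) simp
  qed
  then have "x_minus g = act (?h 0) (x_minus (shift g))"
    using x_plus_shift[OF word_inverse_Sigma_words[OF shift_Sigma_words[OF g]]]
    by (simp add: x_minus_def)
  moreover have "?h 0 = letter_inv (g 0)"
    by (simp add: word_inverse_def shift_def)
  ultimately show ?thesis
    using act_act_letter_inv Sigma_words_letter[OF g] by simp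
qed

lemma x_plus_local:
  assumes r: "r > 0"
  obtains N :: nat where "\<And>g h. g \<in> Sig \<Longrightarrow> h \<in> Sig \<Longrightarrow> (\<forall>i. - int N - 1 \<le> i \<and> i \<le> -1 \<longrightarrow> g i = h i) \<Longrightarrow>
    dist (x_plus g) (x_plus h) < r"
proof -
  obtain N where N: "\<forall>n\<ge>N. \<forall>g\<in>Sig. \<forall>y\<in>past_image g n. \<forall>z\<in>past_image g n. dist y z < r"
    using past_image_uniformly_small[OF r] by blast
  have "dist (x_plus g) (x_plus h) < r"
    if g: "g \<in> Sig" and h: "h \<in> Sig" and agree: "\<forall>i. - int N - 1 \<le> i \<and> i \<le> -1 \<longrightarrow> g i = h i"
    for g h
  proof -
    have "word_act g 0 N = word_act h 0 N"
      using agree by (intro ext word_act_cong) auto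
    then have "past_image g N = past_image h N"
      using agree by (simp add: past_image_def)
    then have "x_plus g \<in> past_image g N" "x_plus h \<in> past_image g N"
      using x_plus_past_image[OF g] x_plus_past_image[OF h] by auto
    then show ?thesis
      using N g by blast
  qed
  then show ?thesis
    using that by blast
qed

lemma x_minus_local:
  assumes r: "r > 0"
  obtains N :: nat where "\<And>g h. g \<in> Sig \<Longrightarrow> h \<in> Sig \<Longrightarrow> (\<forall>i. 0 \<le> i \<and> i \<le> int N \<longrightarrow> g i = h i) \<Longrightarrow>
    dist (x_minus g) (x_minus h) < r"
proof -
  obtain N :: nat where N: "\<And>g h. g \<in> Sig \<Longrightarrow> h \<in> Sig \<Longrightarrow>
      (\<forall>i. - int N - 1 \<le> i \<and> i \<le> -1 \<longrightarrow> g i = h i) \<Longrightarrow> dist (x_plus g) (x_plus h) < r"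
    using x_plus_local[OF r] by blast
  have "dist (x_minus g) (x_minus h) < r"
    if g: "g \<in> Sig" and h: "h \<in> Sig" and agree: "\<forall>i. 0 \<le> i \<and> i \<le> int N \<longrightarrow> g i = h i" for g h
  proof -
    have "\<forall>i. - int N - 1 \<le> i \<and> i \<le> -1 \<longrightarrow> word_inverse g i = word_inverse h i"
      using agree by (simp add: word_inverse_def)
    then show ?thesis
      unfolding x_minus_def by (rule N[OF word_inverse_Sigma_words[OF g] word_inverse_Sigma_words[OF h]])
  qed
  then show ?thesis
    using that by blast
qed

lemma continuous_map_x_plus: "continuous_map (Sigma_top k) euclidean x_plus"
  unfolding continuous_map_Sigma_top_iff
proof (intro ballI allI impI)
  fix g and r :: real assume g: "g \<in> Sig" and r: "r > 0"
  obtain N :: nat where N: "\<And>g h. g \<in> Sig \<Longrightarrow> h \<in> Sig \<Longrightarrow>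
      (\<forall>i. - int N - 1 \<le> i \<and> i \<le> -1 \<longrightarrow> g i = h i) \<Longrightarrow> dist (x_plus g) (x_plus h) < r"
    using x_plus_local[OF r] by blast
  have "dist (x_plus h) (x_plus g) < r"
    if "h \<in> Sig" "\<forall>i. \<bar>i\<bar> \<le> int (Suc N) \<longrightarrow> h i = g i" for h
    using that by (intro N g) auto
  then show "\<exists>N::nat. \<forall>h\<in>Sig. (\<forall>i. \<bar>i\<bar> \<le> int N \<longrightarrow> h i = g i) \<longrightarrow> dist (x_plus h) (x_plus g) < r"
    by blast
qed

lemma continuous_map_x_minus: "continuous_map (Sigma_top k) euclidean x_minus"
  unfolding continuous_map_Sigma_top_iff
proof (intro ballI allI impI)
  fix g and r :: real assume g: "g \<in> Sig" and r: "r > 0"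
  obtain N :: nat where N: "\<And>g h. g \<in> Sig \<Longrightarrow> h \<in> Sig \<Longrightarrow>
      (\<forall>i. 0 \<le> i \<and> i \<le> int N \<longrightarrow> g i = h i) \<Longrightarrow> dist (x_minus g) (x_minus h) < r"
    using x_minus_local[OF r] by blast
  have "dist (x_minus h) (x_minus g) < r"
    if "h \<in> Sig" "\<forall>i. \<bar>i\<bar> \<le> int N \<longrightarrow> h i = g i" for h
    using that by (intro N g) auto
  then show "\<exists>N::nat. \<forall>h\<in>Sig. (\<forall>i. \<bar>i\<bar> \<le> int N \<longrightarrow> h i = g i) \<longrightarrow> dist (x_minus h) (x_minus g) < r"
    by blast
qed

lemma word_act_word_inverse:
  assumes g: "g \<in> Sig"
  shows "word_act (word_inverse g) 0 n (word_act g (int n) n y) = y"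
proof (induction n arbitrary: y)
  case (Suc n)
  have "word_act g (int (Suc n)) (Suc n) y = act (g (int n)) (word_act g (int n) n y)"
    using word_act_Suc_outer[of g "int (Suc n)" n y] by simp
  moreover have "word_inverse g (0 - int n - 1) = letter_inv (g (int n))"
    by (simp add: word_inverse_def)
  ultimately show ?case
    using Suc act_letter_inv Sigma_words_letter[OF g] by simp
qed simp

lemma word_act_inj: "g \<in> Sig \<Longrightarrow> word_act g (int n) n a = word_act g (int n) n b \<Longrightarrow> a = b"
  by (metis word_act_word_inverse)

lemma shift_equivariant_shiftn:
  assumes \<phi>: "\<forall>g\<in>Sig. \<phi> (shift g) = act (g 0) (\<phi> g)" and g: "g \<in> Sig"
  shows "\<phi> (shiftn g n) = word_act g (int n) n (\<phi> g)"
proof (induction n)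
  case (Suc n)
  have "\<phi> (shiftn g (Suc n)) = act (shiftn g n 0) (\<phi> (shiftn g n))"
    using \<phi> shiftn_Sigma_words[OF g] shift_shiftn by metis
  also have "\<dots> = act (g (int n)) (word_act g (int n) n (\<phi> g))"
    using Suc by (simp add: shiftn_def)
  also have "\<dots> = word_act g (int (Suc n)) (Suc n) (\<phi> g)"
    using word_act_Suc_outer[of g "int (Suc n)" n] by simp
  finally show ?case .
qed simp

text \<open>Otherwise \<open>y\<close> would lie in the \<open>N\<close>-th past image of the inverse word, which also contains
  \<open>x_minus h\<close>.\<close>
lemma word_act_source_if_far:
  assumes h: "h \<in> Sig"
    and small: "\<forall>g\<in>Sig. \<forall>y\<in>past_image g N. \<forall>z\<in>past_image g N. dist y z < d"
    and far: "d \<le> dist y (x_minus h)"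
  shows "word_act h (int N) N y \<in> source (h (int N))"
proof -
  have "word_act h (int N) N y \<notin> target (letter_inv (h (int N)))"
  proof
    assume in_target: "word_act h (int N) N y \<in> target (letter_inv (h (int N)))"
    have "word_inverse h (- int N - 1) = letter_inv (h (int N))"
      by (simp add: word_inverse_def)
    then have "word_act (word_inverse h) 0 N (word_act h (int N) N y) \<in> past_image (word_inverse h) N"
      unfolding past_image_def using in_target by simp
    then have "y \<in> past_image (word_inverse h) N"
      using word_act_word_inverse[OF h] by simp
    then have "dist y (x_minus h) < d"
      unfolding x_minus_def
      using small x_plus_past_image[OF word_inverse_Sigma_words[OF h]] word_inverse_Sigma_words[OF h]
      by blast
    with far show False by simp
  qed
  then show ?thesis
    by (simp add: source_def)
qed

text \<open>After \<open>N\<^sub>1 + 1\<close> steps a point far from \<open>x_minus\<close> lies in a target, and after \<open>N\<^sub>2\<close> further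
  steps in a past image of small diameter containing \<open>x_plus\<close>.\<close>
lemma uniform_attraction:
  assumes d: "d > 0" and r: "r > 0"
  shows "\<exists>P. \<forall>h\<in>Sig. \<forall>y. \<forall>p\<ge>P. d \<le> dist y (x_minus h) \<longrightarrow>
    dist (word_act h (int p) p y) (x_plus (shiftn h p)) < r"
proof -
  obtain N1 where N1: "\<forall>n\<ge>N1. \<forall>g\<in>Sig. \<forall>y\<in>past_image g n. \<forall>z\<in>past_image g n. dist y z < d"
    using past_image_uniformly_small[OF d] by blast
  obtain N2 where N2: "\<forall>n\<ge>N2. \<forall>g\<in>Sig. \<forall>y\<in>past_image g n. \<forall>z\<in>past_image g n. dist y z < r"
    using past_image_uniformly_small[OF r] by blast
  have attract: "dist (word_act h (int p) p y) (x_plus (shiftn h p)) < r"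
    if h: "h \<in> Sig" and p: "N1 + 1 + N2 \<le> p" and far: "d \<le> dist y (x_minus h)" for h y p
  proof -
    define z where "z = word_act h (int N1) N1 y"
    have "z \<in> source (h (int N1))"
      unfolding z_def using word_act_source_if_far[OF h _ far] N1 by blast
    define w where "w = act (h (int N1)) z"
    have w_target: "w \<in> target (h (int N1))"
      unfolding w_def using act_source Sigma_words_letter[OF h] \<open>z \<in> source _\<close> by blast
    have "word_act h (int N1 + 1) (Suc N1) y = w"
      unfolding w_def z_def using word_act_Suc_outer[of h "int N1 + 1" N1 y] by simp
    define m where "m = p - (N1 + 1)"
    have pm: "p = m + (N1 + 1)" "N2 \<le> m"
      using p unfolding m_def by auto
    have p_eq: "p = m + Suc N1" and offset: "int p - int m = int N1 + 1"
      using pm(1) by simp_all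
    have "word_act h (int p) p y = word_act h (int p) m (word_act h (int p - int m) (Suc N1) y)"
      using word_act_add[of h "int p" m "Suc N1" y] by (simp only: p_eq)
    also have "\<dots> = word_act h (int p) m w"
      unfolding offset by (simp only: \<open>word_act h (int N1 + 1) (Suc N1) y = w\<close>)
    also have "\<dots> = word_act (shiftn h p) 0 m w"
      unfolding shiftn_def word_act_translate by simp
    finally have "word_act h (int p) p y = word_act (shiftn h p) 0 m w" .
    moreover have "shiftn h p (- int m - 1) = h (int N1)"
      unfolding shiftn_def using pm(1) by (simp add: algebra_simps)
    ultimately have "word_act h (int p) p y \<in> past_image (shiftn h p) m"
      unfolding past_image_def using w_target by simp
    moreover have "x_plus (shiftn h p) \<in> past_image (shiftn h p) m"
      by (rule x_plus_past_image[OF shiftn_Sigma_words[OF h]])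
    ultimately show ?thesis
      using N2 pm(2) shiftn_Sigma_words[OF h] by blast
  qed
  show ?thesis
    by (intro exI[of _ "N1 + 1 + N2"] ballI allI impI attract)
qed

abbreviation Delta :: "((int \<Rightarrow> letter) \<times> 'a) topology" where
  "Delta \<equiv> Delta_top k"

abbreviation tau :: "(int \<Rightarrow> letter) \<times> 'a \<Rightarrow> (int \<Rightarrow> letter) \<times> 'a" where
  "tau \<equiv> skew f finv"

definition s_plus :: "(int \<Rightarrow> letter) \<Rightarrow> (int \<Rightarrow> letter) \<times> 'a" where
  "s_plus g = (g, x_plus g)"

definition s_minus :: "(int \<Rightarrow> letter) \<Rightarrow> (int \<Rightarrow> letter) \<times> 'a" where
  "s_minus g = (g, x_minus g)"

lemma tau_Pair: "tau (g, x) = (shift g, act (g 0) x)"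
  by (simp add: skew_def act_def)

lemma funpow_tau: "(tau ^^ n) p = (shiftn (fst p) n, word_act (fst p) (int n) n (snd p))"
proof (induction n)
  case (Suc n)
  have "(tau ^^ Suc n) p = tau (shiftn (fst p) n, word_act (fst p) (int n) n (snd p))"
    using Suc by simp
  also have "\<dots> = (shiftn (fst p) (Suc n), act (fst p (int n)) (word_act (fst p) (int n) n (snd p)))"
    by (simp add: tau_Pair shift_shiftn) (simp add: shiftn_def)
  also have "act (fst p (int n)) (word_act (fst p) (int n) n (snd p)) =
      word_act (fst p) (int (Suc n)) (Suc n) (snd p)"
    using word_act_Suc_outer[of "fst p" "int (Suc n)" n] by simp
  finally show ?case .
qed simp

lemma continuous_section_pair:
  assumes "continuous_map (Sigma_top k) euclidean y"
  shows "continuous_section k (\<lambda>g. (g, y g))"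
  unfolding continuous_section_def Delta_top_def
  using assms by (simp add: continuous_map_paired continuous_map_id[unfolded id_def])

lemma continuous_section_s_plus: "continuous_section k s_plus"
  unfolding s_plus_def by (rule continuous_section_pair[OF continuous_map_x_plus])

lemma continuous_section_s_minus: "continuous_section k s_minus"
  unfolding s_minus_def by (rule continuous_section_pair[OF continuous_map_x_minus])

lemma skew_invariant_section_pair:
  assumes "\<And>g. g \<in> Sig \<Longrightarrow> y (shift g) = act (g 0) (y g)"
  shows "skew_invariant_section k f finv (\<lambda>g. (g, y g))"
proof -
  have "tau ` (\<lambda>g. (g, y g)) ` Sig = (\<lambda>g. (g, y g)) ` shift ` Sig"
    using assms by (auto simp: image_image tau_Pair)
  then show ?thesis
    unfolding skew_invariant_section_def shift_image_Sigma_words by simp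
qed

lemma skew_invariant_section_s_plus: "skew_invariant_section k f finv s_plus"
  unfolding s_plus_def by (rule skew_invariant_section_pair[OF x_plus_shift])

lemma skew_invariant_section_s_minus: "skew_invariant_section k f finv s_minus"
  unfolding s_minus_def by (rule skew_invariant_section_pair[OF x_minus_shift])

lemma s_plus_disjoint_s_minus: "s_plus ` Sig \<inter> s_minus ` Sig = {}"
  using x_plus_ne_x_minus by (auto simp: s_plus_def s_minus_def)

lemma compactin_s_plus: "compactin Delta (s_plus ` Sig)"
  using image_compactin[OF compactin_Sigma_words] continuous_section_s_plus
  unfolding continuous_section_def by blast

text \<open>The open set of Conley's definition; \<open>trap_closure\<close> is a closed superset that \<open>tau\<close> maps
  back into it.\<close>
definition trap :: "((int \<Rightarrow> letter) \<times> 'a) set" where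
  "trap = {p \<in> Sig \<times> UNIV. snd p \<in> - target (letter_inv (fst p 0))}"

definition trap_closure :: "((int \<Rightarrow> letter) \<times> 'a) set" where
  "trap_closure = {p \<in> Sig \<times> UNIV. snd p \<in> closure (source (fst p 0))}"

lemma openin_trap: "openin Delta trap"
  unfolding trap_def
  by (rule openin_Delta_top_first_letter) (simp add: compact_target compact_imp_closed open_Compl)

lemma closedin_trap_closure: "closedin Delta trap_closure"
proof -
  have "topspace Delta - trap_closure = {p \<in> Sig \<times> UNIV. snd p \<in> - closure (source (fst p 0))}"
    by (auto simp: trap_closure_def)
  moreover have "openin Delta \<dots>"
    by (rule openin_Delta_top_first_letter) auto
  ultimately show ?thesis
    unfolding closedin_def by (auto simp: trap_closure_def)
qed

lemma closure_of_trap: "Delta closure_of trap \<subseteq> trap_closure"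
proof (rule closure_of_minimal[OF _ closedin_trap_closure])
  show "trap \<subseteq> trap_closure"
    unfolding trap_def trap_closure_def source_def using closure_subset by fastforce
qed

lemma tau_trap_closure: "tau ` trap_closure \<subseteq> trap"
proof
  fix q assume "q \<in> tau ` trap_closure"
  then obtain g x where gx: "g \<in> Sig" "x \<in> closure (source (g 0))" "q = tau (g, x)"
    unfolding trap_closure_def by auto
  have l: "fst (g 0) < k"
    using Sigma_words_letter[OF gx(1)] .
  have "act (g 0) ` closure (source (g 0)) \<subseteq> target (g 0)"
    by (rule image_closure_subset[OF continuous_on_subset[OF continuous_on_act[OF l]]])
      (auto simp: compact_imp_closed compact_target l act_source)
  then have "act (g 0) x \<in> target (g 0)"
    using gx(2) by blast
  moreover have "g 0 \<noteq> letter_inv (g 1)" "fst (letter_inv (g 1)) < k"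
    using Sigma_words_reduced'[OF gx(1), of 0] Sigma_words_letter[OF gx(1)] by auto
  then have "target (g 0) \<inter> target (letter_inv (g 1)) = {}"
    using disjoint_target l by blast
  ultimately have "act (g 0) x \<notin> target (letter_inv (shift g 0))"
    by (auto simp: shift_def)
  then show "q \<in> trap"
    unfolding trap_def using gx shift_Sigma_words by (simp add: tau_Pair)
qed

lemma s_plus_trap: "s_plus ` Sig \<subseteq> trap"
proof
  fix p assume "p \<in> s_plus ` Sig"
  then obtain g where g: "g \<in> Sig" "p = s_plus g" by blast
  have "g (-1) \<noteq> letter_inv (g 0)"
    using Sigma_words_reduced'[OF g(1), of "-1"] by simp
  moreover have "fst (g (-1)) < k" "fst (letter_inv (g 0)) < k"
    using Sigma_words_letter[OF g(1)] by auto
  ultimately have "target (g (-1)) \<inter> target (letter_inv (g 0)) = {}"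
    by (rule disjoint_target[rotated 2])
  then show "p \<in> trap"
    using x_plus_target[OF g(1)] g unfolding trap_def s_plus_def by auto
qed

lemma s_minus_not_trap: "s_minus ` Sig \<inter> trap = {}"
  using x_minus_target unfolding trap_def s_minus_def by auto

lemma funpow_tau_s_plus: "g \<in> Sig \<Longrightarrow> (tau ^^ n) (s_plus g) = s_plus (shiftn g n)"
  using shift_equivariant_shiftn[of x_plus g n] x_plus_shift by (simp add: funpow_tau s_plus_def)

lemma funpow_tau_s_minus: "g \<in> Sig \<Longrightarrow> (tau ^^ n) (s_minus g) = s_minus (shiftn g n)"
  using shift_equivariant_shiftn[of x_minus g n] x_minus_shift by (simp add: funpow_tau s_minus_def)

text \<open>A point surviving \<open>m + 1\<close> backward steps inside the trap lies in the \<open>m\<close>-th past image.\<close>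
lemma s_plus_eq_Inter_trap: "s_plus ` Sig = (\<Inter>n. (tau ^^ n) ` trap)"
proof
  show "s_plus ` Sig \<subseteq> (\<Inter>n. (tau ^^ n) ` trap)"
  proof (intro subsetI INT_I)
    fix p n assume "p \<in> s_plus ` Sig"
    then obtain g where g: "g \<in> Sig" "p = s_plus g" by blast
    define g' where "g' = (\<lambda>i. g (i + (- int n)))"
    have g': "g' \<in> Sig"
      unfolding g'_def by (rule Sigma_words_translate[OF g(1)])
    have "shiftn g' n = g"
      by (simp add: g'_def shiftn_def)
    then have "(tau ^^ n) (s_plus g') = p"
      using funpow_tau_s_plus[OF g'] g(2) by simp
    moreover have "s_plus g' \<in> trap"
      using s_plus_trap g' by blast
    ultimately show "p \<in> (tau ^^ n) ` trap" by blast
  qed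
next
  show "(\<Inter>n. (tau ^^ n) ` trap) \<subseteq> s_plus ` Sig"
  proof
    fix p assume p: "p \<in> (\<Inter>n. (tau ^^ n) ` trap)"
    have preimage: "\<exists>g x. g \<in> Sig \<and> x \<in> source (g 0) \<and>
        p = (shiftn g (Suc m), word_act (shiftn g (Suc m)) 0 m (act (g 0) x))" for m
    proof -
      obtain q where q: "q \<in> trap" "p = (tau ^^ Suc m) q"
        using p by blast
      obtain g x where gx: "q = (g, x)" by force
      have "p = (shiftn g (Suc m), word_act g (int (Suc m)) (Suc m) x)"
        using q(2) funpow_tau[of "Suc m" q] gx by (simp only: fst_conv snd_conv)
      also have "word_act g (int (Suc m)) (Suc m) x = word_act (shiftn g (Suc m)) 0 m (act (g 0) x)"
        unfolding shiftn_def word_act_translate by simp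
      finally have "p = (shiftn g (Suc m), word_act (shiftn g (Suc m)) 0 m (act (g 0) x))" .
      moreover have "g \<in> Sig" "x \<in> source (g 0)"
        using q(1) gx unfolding trap_def source_def by auto
      ultimately show ?thesis
        by (intro exI[of _ g] exI[of _ x]) simp
    qed
    have fst_p: "fst p \<in> Sig"
      using preimage[of 0] shiftn_Sigma_words by auto
    have "snd p \<in> past_image (fst p) m" for m
    proof -
      obtain g x where gx: "g \<in> Sig" "x \<in> source (g 0)"
        "p = (shiftn g (Suc m), word_act (shiftn g (Suc m)) 0 m (act (g 0) x))"
        using preimage by blast
      have "act (g 0) x \<in> target (g 0)"
        using act_source[OF Sigma_words_letter[OF gx(1)] gx(2)] .
      moreover have "fst p (- int m - 1) = g 0"
        using gx(3) by (simp add: shiftn_def)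
      ultimately show ?thesis
        unfolding past_image_def using gx(3) by simp
    qed
    then have "p = s_plus (fst p)"
      using x_plus_unique[OF fst_p] by (simp add: s_plus_def prod_eq_iff)
    then show "p \<in> s_plus ` Sig"
      using fst_p by blast
  qed
qed

lemma topological_attractor_s_plus: "topological_attractor Delta tau (s_plus ` Sig)"
  unfolding topological_attractor_def
proof (intro conjI exI[of _ trap])
  show "tau ` s_plus ` Sig = s_plus ` Sig"
    using skew_invariant_section_s_plus unfolding skew_invariant_section_def .
  show "tau ` (Delta closure_of trap) \<subseteq> trap"
    using closure_of_trap tau_trap_closure by blast
qed (rule compactin_s_plus openin_trap s_plus_trap s_plus_eq_Inter_trap)+

lemma compact_space_Delta: "compact_space Delta"
proof -
  have "compact_space (Sigma_top k)" "compact_space (euclidean :: 'a topology)"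
    using compactin_Sigma_words compact_UNIV by (simp_all add: compact_space_def compactin_euclidean_iff)
  then show ?thesis
    by (simp add: Delta_top_def compact_space_prod_topology)
qed

lemma continuous_map_dist_x_plus: "continuous_map Delta euclidean (\<lambda>p. dist (snd p) (x_plus (fst p)))"
proof -
  have "continuous_map Delta (prod_topology euclidean euclidean) (\<lambda>p. (snd p, x_plus (fst p)))"
    unfolding Delta_top_def continuous_map_paired
    using continuous_map_compose[OF continuous_map_fst continuous_map_x_plus]
    by (simp add: continuous_map_snd o_def)
  moreover have "continuous_map euclidean euclidean (\<lambda>z :: 'a \<times> 'a. dist (fst z) (snd z))"
    by (simp add: continuous_map_iff_continuous2 continuous_on_dist continuous_on_fst continuous_on_snd)
  ultimately have "continuous_map Delta euclidean
      ((\<lambda>z. dist (fst z) (snd z)) \<circ> (\<lambda>p. (snd p, x_plus (fst p))))"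
    unfolding prod_topology_euclidean by (rule continuous_map_compose)
  then show ?thesis
    by (simp add: o_def)
qed

text \<open>By compactness of \<open>Delta\<close>, every neighbourhood of the attractor contains a uniform tube
  around the graph of \<open>x_plus\<close>.\<close>
lemma tube_in_open_nbhd:
  assumes V: "openin Delta V" and sub: "s_plus ` Sig \<subseteq> V"
  obtains r where "r > 0" "\<And>h z. h \<in> Sig \<Longrightarrow> dist z (x_plus h) < r \<Longrightarrow> (h, z) \<in> V"
proof -
  define F where "F p = dist (snd p) (x_plus (fst p))" for p
  define C where "C = topspace Delta - V"
  show ?thesis
  proof (cases "C = {}")
    case True
    then show ?thesis
      using that[of 1] by (auto simp: C_def)
  next
    case False
    have "compactin Delta C"
      unfolding C_def by (intro closedin_compact_space compact_space_Delta closedin_diff closedin_topspace V)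
    then have "compact (F ` C)"
      using image_compactin continuous_map_dist_x_plus compactin_euclidean_iff unfolding F_def by blast
    then obtain p where p: "p \<in> C" "\<And>q. q \<in> C \<Longrightarrow> F p \<le> F q"
      using compact_attains_inf[of "F ` C"] False by auto
    have "F p > 0"
    proof (rule ccontr)
      assume "\<not> F p > 0"
      then have "p = s_plus (fst p)" "fst p \<in> Sig"
        using p(1) by (auto simp: F_def s_plus_def C_def prod_eq_iff)
      then show False
        using sub p(1) by (auto simp: C_def)
    qed
    moreover have "(h, z) \<in> V" if "h \<in> Sig" "dist z (x_plus h) < F p" for h z
      using p(2)[of "(h, z)"] that by (force simp: C_def F_def)
    ultimately show ?thesis
      using that by blast
  qed
qed

lemma basin_s_plus: "basin Delta tau (s_plus ` Sig) = topspace Delta - s_minus ` Sig"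
proof (intro equalityI subsetI)
  fix p assume p: "p \<in> basin Delta tau (s_plus ` Sig)"
  then have "eventually (\<lambda>n. (tau ^^ n) p \<in> trap) sequentially"
    unfolding basin_def using openin_trap s_plus_trap by blast
  then obtain N where N: "(tau ^^ N) p \<in> trap"
    by (meson eventually_sequentially order.refl)
  have "p \<notin> s_minus ` Sig"
  proof
    assume "p \<in> s_minus ` Sig"
    then obtain g where "g \<in> Sig" "p = s_minus g" by blast
    then have "(tau ^^ N) p \<in> s_minus ` Sig"
      using funpow_tau_s_minus shiftn_Sigma_words by auto
    with N s_minus_not_trap show False by blast
  qed
  moreover have "p \<in> topspace Delta"
    using p unfolding basin_def by blast
  ultimately show "p \<in> topspace Delta - s_minus ` Sig" by blast
next
  fix p assume p: "p \<in> topspace Delta - s_minus ` Sig"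
  obtain g x where gx: "p = (g, x)" by force
  have g: "g \<in> Sig" and "x \<noteq> x_minus g"
    using p gx by (auto simp: s_minus_def)
  then have d: "dist x (x_minus g) > 0" by simp
  have "eventually (\<lambda>n. (tau ^^ n) p \<in> V) sequentially"
    if V: "openin Delta V" "s_plus ` Sig \<subseteq> V" for V
  proof -
    obtain r where r: "r > 0" "\<And>h z. h \<in> Sig \<Longrightarrow> dist z (x_plus h) < r \<Longrightarrow> (h, z) \<in> V"
      using tube_in_open_nbhd[OF V] by blast
    obtain P where P: "\<forall>h\<in>Sig. \<forall>y. \<forall>p\<ge>P. dist x (x_minus g) \<le> dist y (x_minus h) \<longrightarrow>
        dist (word_act h (int p) p y) (x_plus (shiftn h p)) < r"
      using uniform_attraction[OF d r(1)] by blast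
    have "(tau ^^ n) p \<in> V" if "P \<le> n" for n
      using r(2)[OF shiftn_Sigma_words[OF g]] P g that by (simp add: gx funpow_tau)
    then show ?thesis
      unfolding eventually_sequentially by blast
  qed
  then show "p \<in> basin Delta tau (s_plus ` Sig)"
    unfolding basin_def using p by blast
qed

lemma glue_approx:
  fixes \<Phi> :: "(int \<Rightarrow> letter) \<Rightarrow> 'b::metric_space"
  assumes cont: "continuous_map (Sigma_top k) euclidean \<Phi>"
    and g1: "g1 \<in> Sig" and g2: "g2 \<in> Sig" and e: "e > 0"
  obtains h p where "h \<in> Sig" "P \<le> p" "dist (\<Phi> h) (\<Phi> g1) < e" "dist (\<Phi> (shiftn h p)) (\<Phi> g2) < e"
proof -
  have local: "\<exists>N::nat. \<forall>h\<in>Sig. (\<forall>i. \<bar>i\<bar> \<le> int N \<longrightarrow> h i = g i) \<longrightarrow> dist (\<Phi> h) (\<Phi> g) < e"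
    if "g \<in> Sig" for g
    using cont that e unfolding continuous_map_Sigma_top_iff by blast
  obtain N1 :: nat where N1: "\<forall>h\<in>Sig. (\<forall>i. \<bar>i\<bar> \<le> int N1 \<longrightarrow> h i = g1 i) \<longrightarrow> dist (\<Phi> h) (\<Phi> g1) < e"
    using local[OF g1] by blast
  obtain N2 :: nat where N2: "\<forall>h\<in>Sig. (\<forall>i. \<bar>i\<bar> \<le> int N2 \<longrightarrow> h i = g2 i) \<longrightarrow> dist (\<Phi> h) (\<Phi> g2) < e"
    using local[OF g2] by blast
  define M where "M = max P (max N1 N2)"
  obtain h where h: "h \<in> Sig" "\<forall>i. \<bar>i\<bar> \<le> int M \<longrightarrow> h i = g1 i"
    "\<forall>i. \<bar>i\<bar> \<le> int M \<longrightarrow> shiftn h (2 * M + 2) i = g2 i"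
    using Sigma_words_glue[OF k_gt_1 g1 g2] by blast
  have "\<forall>i. \<bar>i\<bar> \<le> int N1 \<longrightarrow> h i = g1 i" "\<forall>i. \<bar>i\<bar> \<le> int N2 \<longrightarrow> shiftn h (2 * M + 2) i = g2 i"
    using h(2,3) by (auto simp: M_def)
  moreover have "P \<le> 2 * M + 2"
    by (simp add: M_def)
  ultimately show ?thesis
    using that[of h "2 * M + 2"] N1 N2 h(1) shiftn_Sigma_words[OF h(1)] by blast
qed

definition invariant_fibre_map :: "((int \<Rightarrow> letter) \<Rightarrow> 'a) \<Rightarrow> bool" where
  "invariant_fibre_map y \<longleftrightarrow> continuous_map (Sigma_top k) euclidean y \<and>
     (\<forall>g\<in>Sig. y (shift g) = act (g 0) (y g))"

lemma invariant_fibre_map_section: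
  assumes "continuous_section k s" "skew_invariant_section k f finv s"
  shows "invariant_fibre_map (snd \<circ> s)"
proof -
  have s_cont: "continuous_map (Sigma_top k) Delta s" and s_fst: "\<And>g. g \<in> Sig \<Longrightarrow> fst (s g) = g"
    using assms(1) unfolding continuous_section_def by auto
  have s_eq: "s g = (g, (snd \<circ> s) g)" if "g \<in> Sig" for g
    using s_fst[OF that] by (simp add: prod_eq_iff)
  have "continuous_map (Sigma_top k) euclidean (snd \<circ> s)"
    by (rule continuous_map_compose[OF s_cont]) (simp add: Delta_top_def continuous_map_snd)
  moreover have "(snd \<circ> s) (shift g) = act (g 0) ((snd \<circ> s) g)" if g: "g \<in> Sig" for g
  proof -
    have "tau (s g) \<in> tau ` s ` Sig"
      using g by (intro imageI)
    also have "tau ` s ` Sig = s ` Sig"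
      using assms(2) unfolding skew_invariant_section_def .
    finally have "tau (s g) \<in> s ` Sig" .
    moreover have "p = (fst p, (snd \<circ> s) (fst p))" if "p \<in> s ` Sig" for p
      using that s_eq s_fst by fastforce
    ultimately show ?thesis
      using s_eq[OF g] by (metis prod.inject tau_Pair)
  qed
  ultimately show ?thesis
    by (simp add: invariant_fibre_map_def)
qed

lemma invariant_fibre_map_observable:
  assumes "invariant_fibre_map y"
  shows "continuous_map (Sigma_top k) euclidean (\<lambda>g. (y g, x_plus g, x_minus g))"
  using assms continuous_map_x_plus continuous_map_x_minus
  by (simp add: invariant_fibre_map_def continuous_map_paired flip: prod_topology_euclidean)

lemma dist_observable_less:
  assumes "dist (y a, x_plus a, x_minus a) (y b, x_plus b, x_minus b) < e"
  shows "dist (y a) (y b) < e" "dist (x_plus a) (x_plus b) < e" "dist (x_minus a) (x_minus b) < e"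
  using assms dist_fst_le[of "(y a, x_plus a, x_minus a)" "(y b, x_plus b, x_minus b)"]
    dist_snd_le[of "(y a, x_plus a, x_minus a)" "(y b, x_plus b, x_minus b)"]
    dist_fst_le[of "(x_plus a, x_minus a)" "(x_plus b, x_minus b)"]
    dist_snd_le[of "(x_plus a, x_minus a)" "(x_plus b, x_minus b)"]
  by simp_all

text \<open>If \<open>y g\<close> were away from both \<open>x_plus g\<close> and \<open>x_minus g\<close>, then so is \<open>y h\<close> for a word \<open>h\<close> glued
  from two copies of \<open>g\<close>, and invariance carries \<open>y h\<close> close to \<open>x_plus\<close> at the second copy.\<close>
lemma invariant_fibre_map_values:
  assumes y: "invariant_fibre_map y" and g: "g \<in> Sig"
  shows "y g = x_plus g \<or> y g = x_minus g"
proof (rule ccontr)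
  assume "\<not> (y g = x_plus g \<or> y g = x_minus g)"
  then have d: "d > 0" if "d = min (dist (y g) (x_plus g)) (dist (y g) (x_minus g))" for d
    using that by simp
  define d where "d = min (dist (y g) (x_plus g)) (dist (y g) (x_minus g))"
  have d_pos: "d > 0" and d_le: "d \<le> dist (y g) (x_plus g)" "d \<le> dist (y g) (x_minus g)"
    using d[OF d_def] by (simp_all add: d_def)
  obtain P where P: "\<forall>h\<in>Sig. \<forall>z. \<forall>p\<ge>P. d / 2 \<le> dist z (x_minus h) \<longrightarrow>
      dist (word_act h (int p) p z) (x_plus (shiftn h p)) < d / 4"
    using uniform_attraction[of "d / 2" "d / 4"] d_pos by auto
  obtain h p where h: "h \<in> Sig" "P \<le> p"
    and near: "dist (y h, x_plus h, x_minus h) (y g, x_plus g, x_minus g) < d / 4"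
      "dist (y (shiftn h p), x_plus (shiftn h p), x_minus (shiftn h p)) (y g, x_plus g, x_minus g) < d / 4"
    using glue_approx[OF invariant_fibre_map_observable[OF y] g g, of "d / 4" P] d_pos by auto
  note near1 = dist_observable_less[OF near(1)] and near2 = dist_observable_less[OF near(2)]
  have "dist (y g) (x_minus g) \<le> dist (y g) (y h) + dist (y h) (x_minus h) + dist (x_minus h) (x_minus g)"
    using dist_triangle[of "y g" "x_minus g" "y h"] dist_triangle[of "y h" "x_minus g" "x_minus h"] by linarith
  then have "d / 2 \<le> dist (y h) (x_minus h)"
    using near1(1,3) d_le(2) by (simp add: dist_commute)
  then have "dist (word_act h (int p) p (y h)) (x_plus (shiftn h p)) < d / 4"
    using P h by blast
  moreover have "y (shiftn h p) = word_act h (int p) p (y h)"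
    using shift_equivariant_shiftn[of y h p] y h(1) by (simp add: invariant_fibre_map_def)
  ultimately have "dist (y g) (x_plus g) < 3 * d / 4"
    using dist_triangle_third[of "y g" "y (shiftn h p)" "3 * d / 4" "x_plus (shiftn h p)" "x_plus g"]
      near2(1,2) by (simp add: dist_commute)
  with d_le(1) d_pos show False by simp
qed

text \<open>A glued word \<open>h\<close> with \<open>y h \<noteq> x_plus h\<close> near \<open>g\<^sub>1\<close> and \<open>y \<noteq> x_minus\<close> at its shift near \<open>g\<^sub>2\<close>
  is impossible, since invariance and injectivity of \<open>word_act\<close> transport the value \<open>x_plus\<close> back.\<close>
lemma invariant_fibre_map_cases:
  assumes y: "invariant_fibre_map y"
  shows "(\<forall>g\<in>Sig. y g = x_plus g) \<or> (\<forall>g\<in>Sig. y g = x_minus g)"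
proof (rule ccontr)
  assume "\<not> ?thesis"
  then obtain g1 g2 where g1: "g1 \<in> Sig" "y g1 \<noteq> x_plus g1" and g2: "g2 \<in> Sig" "y g2 \<noteq> x_minus g2"
    by blast
  define e where "e = min (dist (y g1) (x_plus g1)) (dist (y g2) (x_minus g2)) / 3"
  have e: "e > 0" "3 * e \<le> dist (y g1) (x_plus g1)" "3 * e \<le> dist (y g2) (x_minus g2)"
    using g1(2) g2(2) by (auto simp: e_def)
  obtain h p where h: "h \<in> Sig"
    and near: "dist (y h, x_plus h, x_minus h) (y g1, x_plus g1, x_minus g1) < e"
      "dist (y (shiftn h p), x_plus (shiftn h p), x_minus (shiftn h p)) (y g2, x_plus g2, x_minus g2) < e"
    using glue_approx[OF invariant_fibre_map_observable[OF y] g1(1) g2(1) e(1), of 0] by auto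
  note near1 = dist_observable_less[OF near(1)] and near2 = dist_observable_less[OF near(2)]
  have "y h \<noteq> x_plus h"
  proof
    assume "y h = x_plus h"
    then have "dist (y g1) (x_plus g1) < 3 * e"
      using dist_triangle_third[of "y g1" "y h" "3 * e" "x_plus h" "x_plus g1"] near1(1,2) e(1)
      by (simp add: dist_commute)
    with e(2) show False by simp
  qed
  have "y (shiftn h p) \<noteq> x_minus (shiftn h p)"
  proof
    assume "y (shiftn h p) = x_minus (shiftn h p)"
    then have "dist (y g2) (x_minus g2) < 3 * e"
      using dist_triangle_third[of "y g2" "y (shiftn h p)" "3 * e" "x_minus (shiftn h p)" "x_minus g2"]
        near2(1,3) e(1)
      by (simp add: dist_commute)
    with e(3) show False by simp
  qed
  then have "y (shiftn h p) = x_plus (shiftn h p)"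
    using invariant_fibre_map_values[OF y shiftn_Sigma_words[OF h]] by blast
  then have "word_act h (int p) p (y h) = word_act h (int p) p (x_plus h)"
    using shift_equivariant_shiftn[of y h p] shift_equivariant_shiftn[of x_plus h p] y h x_plus_shift
    by (simp add: invariant_fibre_map_def)
  then show False
    using word_act_inj[OF h] \<open>y h \<noteq> x_plus h\<close> by blast
qed

lemma invariant_section_unique:
  assumes "continuous_section k s" "skew_invariant_section k f finv s"
  shows "(\<forall>g\<in>Sig. s g = s_plus g) \<or> (\<forall>g\<in>Sig. s g = s_minus g)"
proof -
  have s_fst: "\<And>g. g \<in> Sig \<Longrightarrow> fst (s g) = g"
    using assms(1) unfolding continuous_section_def by blast
  from invariant_fibre_map_cases[OF invariant_fibre_map_section[OF assms]]
  show ?thesis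
    by (elim disjE) (auto simp: s_plus_def s_minus_def prod_eq_iff s_fst)
qed

text \<open>Replacing the word by its inverse conjugates \<open>tau\<close> to its inverse, exchanging the roles of
  \<open>s_plus\<close> and \<open>s_minus\<close>.\<close>
definition flip_word :: "(int \<Rightarrow> letter) \<times> 'a \<Rightarrow> (int \<Rightarrow> letter) \<times> 'a" where
  "flip_word p = (word_inverse (fst p), snd p)"

lemma continuous_map_flip_word: "continuous_map Delta Delta flip_word"
  unfolding Delta_top_def flip_word_def continuous_map_paired
  by (simp add: continuous_map_snd continuous_map_compose[OF continuous_map_fst continuous_map_word_inverse,
        unfolded o_def])

lemma flip_word_topspace: "p \<in> topspace Delta \<Longrightarrow> flip_word p \<in> topspace Delta"
  by (auto simp: flip_word_def word_inverse_Sigma_words)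

lemma tau_topspace: "p \<in> topspace Delta \<Longrightarrow> tau p \<in> topspace Delta"
  by (cases p) (auto simp: tau_Pair shift_Sigma_words)

lemma inj_on_tau: "inj_on tau (topspace Delta)"
proof (rule inj_onI)
  fix p q assume p: "p \<in> topspace Delta" and "q \<in> topspace Delta" and eq: "tau p = tau q"
  obtain g x h y where pq: "p = (g, x)" "q = (h, y)" by force
  have shift_eq: "shift g = shift h" and act_eq: "act (g 0) x = act (h 0) y"
    using eq pq by (simp_all add: tau_Pair)
  have "g = h"
  proof
    fix i
    have "shift g (i - 1) = shift h (i - 1)"
      using shift_eq by simp
    then show "g i = h i"
      by (simp add: shift_def)
  qed
  moreover have "g \<in> Sig"
    using p pq by simp
  ultimately have "x = y"
    using act_eq act_letter_inv[OF Sigma_words_letter] by metis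
  with \<open>g = h\<close> pq show "p = q" by simp
qed

lemma shift_word_inverse_shift: "word_inverse (shift (word_inverse g)) = (\<lambda>i. g (i - 1))"
proof
  fix i :: int
  show "word_inverse (shift (word_inverse g)) i = g (i - 1)"
    unfolding word_inverse_def shift_def letter_inv_letter_inv by (rule arg_cong[where f = g]) simp
qed

lemma inv_tau_conj_flip_word:
  assumes p: "p \<in> topspace Delta"
  shows "inv_into (topspace Delta) tau p = flip_word (tau (flip_word p))"
proof -
  obtain g x where gx: "p = (g, x)" by force
  have g: "g \<in> Sig"
    using p gx by simp
  have "flip_word (tau (flip_word p)) = ((\<lambda>i. g (i - 1)), act (letter_inv (g (-1))) x)"
    using gx by (simp add: flip_word_def tau_Pair shift_word_inverse_shift) (simp add: word_inverse_def)
  then have "tau (flip_word (tau (flip_word p))) = p"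
    using gx act_act_letter_inv Sigma_words_letter[OF g] by (simp add: tau_Pair shift_def)
  then show ?thesis
    using inv_into_f_eq[OF inj_on_tau] flip_word_topspace tau_topspace p by metis
qed

lemma involutive_conjugacy_flip_word:
  "involutive_conjugacy Delta flip_word tau (inv_into (topspace Delta) tau)"
proof
  show "continuous_map Delta Delta flip_word"
    by (rule continuous_map_flip_word)
  show "flip_word (flip_word p) = p" for p
    by (simp add: flip_word_def)
  show "tau p \<in> topspace Delta" if "p \<in> topspace Delta" for p
    using that by (rule tau_topspace)
  show "inv_into (topspace Delta) tau p = flip_word (tau (flip_word p))" if "p \<in> topspace Delta" for p
    using that by (rule inv_tau_conj_flip_word)
qed

lemma flip_word_s_plus: "flip_word ` s_plus ` Sig = s_minus ` Sig"
proof -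
  have "flip_word ` s_plus ` Sig = s_minus ` word_inverse ` Sig"
    by (auto simp: image_image flip_word_def s_plus_def s_minus_def x_minus_def intro!: image_cong)
  then show ?thesis
    by (simp add: word_inverse_image_Sigma_words)
qed

lemma flip_word_topspace_image: "flip_word ` topspace Delta = topspace Delta"
  using involutive_conjugacy.image_image_P[OF involutive_conjugacy_flip_word, of "topspace Delta"]
    flip_word_topspace by blast

lemma topological_repellor_s_minus: "topological_repellor Delta tau (s_minus ` Sig)"
  unfolding topological_repellor_def flip_word_s_plus[symmetric]
  by (rule involutive_conjugacy.topological_attractor_conj[OF involutive_conjugacy_flip_word
        topological_attractor_s_plus])

lemma basin_inv_s_minus:
  "basin Delta (inv_into (topspace Delta) tau) (s_minus ` Sig) = topspace Delta - s_plus ` Sig"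
proof -
  have s_plus_sub: "s_plus ` Sig \<subseteq> topspace Delta"
    by (auto simp: s_plus_def)
  have "basin Delta (inv_into (topspace Delta) tau) (flip_word ` s_plus ` Sig) =
      flip_word ` basin Delta tau (s_plus ` Sig)"
    by (rule involutive_conjugacy.basin_conj[OF involutive_conjugacy_flip_word s_plus_sub])
  then have "basin Delta (inv_into (topspace Delta) tau) (s_minus ` Sig) =
      flip_word ` (topspace Delta - s_minus ` Sig)"
    by (simp only: flip_word_s_plus basin_s_plus)
  also have "\<dots> = flip_word ` topspace Delta - flip_word ` s_minus ` Sig"
    by (rule inj_on_image_set_diff[OF involutive_conjugacy.inj_on_P[OF involutive_conjugacy_flip_word]])
      (auto simp: s_minus_def)
  also have "flip_word ` s_minus ` Sig = s_plus ` Sig"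
    using involutive_conjugacy.image_image_P[OF involutive_conjugacy_flip_word s_plus_sub]
    by (simp only: flip_word_s_plus)
  finally show ?thesis
    by (simp only: flip_word_topspace_image)
qed

end

theorem proposition6p4:
  fixes k :: nat
    and f finv :: "nat \<Rightarrow> 'a::metric_space \<Rightarrow> 'a"
  assumes "compact (UNIV :: 'a set)"
    and "k > 1"
    and "\<forall>i<k. homeomorphism UNIV UNIV (f i) (finv i)"
    and "compact_contracting_ping_pong k f finv"
  shows "\<exists>sp sm :: (int \<Rightarrow> letter) \<Rightarrow> (int \<Rightarrow> letter) \<times> 'a.
     continuous_section k sp \<and> skew_invariant_section k f finv sp \<and>
     continuous_section k sm \<and> skew_invariant_section k f finv sm \<and>
     (\<forall>s. continuous_section k s \<and> skew_invariant_section k f finv s \<longrightarrow>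
          (\<forall>g\<in>Sigma_words k. s g = sp g) \<or> (\<forall>g\<in>Sigma_words k. s g = sm g)) \<and>
     sp ` Sigma_words k \<inter> sm ` Sigma_words k = {} \<and>
     topological_attractor (Delta_top k) (skew f finv) (sp ` Sigma_words k) \<and>
     basin (Delta_top k) (skew f finv) (sp ` Sigma_words k)
       = topspace (Delta_top k) - sm ` Sigma_words k \<and>
     topological_repellor (Delta_top k) (skew f finv) (sm ` Sigma_words k) \<and>
     basin (Delta_top k) (inv_into (topspace (Delta_top k)) (skew f finv)) (sm ` Sigma_words k)
       = topspace (Delta_top k) - sp ` Sigma_words k"
proof -
  obtain A B :: "nat \<Rightarrow> 'a set" where
    "\<forall>i<k. compact (A i) \<and> compact (B i)" "\<forall>i<k. \<forall>j<k. A i \<inter> B j = {}"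
    "\<forall>i<k. \<forall>j<k. i \<noteq> j \<longrightarrow> A i \<inter> A j = {} \<and> B i \<inter> B j = {}"
    "\<forall>i<k. f i ` (UNIV - A i) \<subseteq> B i" "\<forall>i<k. contraction_on (f i) (UNIV - A i)"
    "\<forall>i<k. contraction_on (finv i) (UNIV - B i)"
    using assms(4) unfolding compact_contracting_ping_pong_def by (elim exE conjE) (rule that)
  then interpret ping_pong k f finv A B
    using assms(1-3) by unfold_locales
  have unique: "\<forall>s. continuous_section k s \<and> skew_invariant_section k f finv s \<longrightarrow>
      (\<forall>g\<in>Sigma_words k. s g = s_plus g) \<or> (\<forall>g\<in>Sigma_words k. s g = s_minus g)"
    using invariant_section_unique by blast
  show ?thesis
    by (intro exI[of _ s_plus] exI[of _ s_minus] conjI unique continuous_section_s_plus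
        skew_invariant_section_s_plus continuous_section_s_minus skew_invariant_section_s_minus
        s_plus_disjoint_s_minus topological_attractor_s_plus basin_s_plus
        topological_repellor_s_minus basin_inv_s_minus)
qed

end
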